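(* Let $\mathsf{k}$ be a field of characteristic zero, $S=\mathsf{k}[x,y,z]$, $R=\mathsf{k}[X,Y,Z]$ with $S$ acting by differentiation. Let $F\in R$ be nonzero homogeneous of odd degree $d\ge3$, $A=S/\operatorname{Ann}_S(F)$, and $\ell\in S_1$ with $\ell^2\ne0$ and $\ell^3=0$ in $A$. Set $(r,s,t)=(h_{A^{(2)}}(\frac{d-1}2),h_{A^{(1)}}(\frac{d-1}2),h_A(\frac{d-1}2))$. Then: (1) If $d\ge5$, $r\in[1,\frac{d-1}2-1]$, $s\in[2r,\frac{d-1}2+r]$ and $t\in[2s-r,\frac{d-1}2+s+1]$, then $h_{A^{(2)}}(i)=i+1$ for $0\le i\le r-1$ and $h_{A^{(2)}}(i)=r$ for $r\le i\le\frac{d-1}2$; $h_{A^{(1)}}(i)=2i+1$ for $0\le i\le r-1$, $h_{A^{(1)}}(i)=i+r+1$ for $r\le i\le s-r-1$, $h_{A^{(1)}}(i)=s$ for $s-r\le i\le\frac{d-1}2$. If $t=3r$, then $h_A$ on $0\le i\le\frac{d-1}2$ is one of: (a) $h_A(0)=1$, $h_A(i)=3i$ for $1\le i\le r-1$, $h_A(i)=3r$ for $r\le i\le\frac{d-1}2$; or (b) $h_A(0)=1$, $h_A(i)=3i$ for $1\le i\le r-1$, $h_A(r)=3r-1$, $h_A(i)=3r$ for $r+1\le i\le\frac{d-1}2$. Otherwise: $h_A(0)=1$; $h_A(i)=3i$ for $1\le i\le r$; $h_A(i)=2i+r+1$ for $r+1\le i\le s-r-1$; at $i=s-r$, $h_A(i)=2i+r+1$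 if $t>2s-r$ and $s>2r$, and $h_A(i)=2i+r$ if $t>2s-r$ and $s=2r$; $h_A(i)=i+s+1$ for $s-r+1\le i\le t-s-1$; $h_A(i)=t$ for $t-s\le i\le\frac{d-1}2$. (2) If $d\ge3$, $r\in[1,\frac{d-1}2-1]$, $s=\frac{d-1}2+r+1$ and $t=d+r$, then $h_{A^{(1)}}(i)=2i+1$ for $0\le i\le r$ and $h_{A^{(1)}}(i)=i+1+r$ for $r+1\le i\le\frac{d-1}2$; and $h_A(0)=1$, $h_A(i)=3i$ for $1\le i\le r+1$, $h_A(i)=2i+1+r$ for $r+2\le i\le\frac{d-1}2$. (3) If $d\ge3$, $r=\frac{d-1}2$, $s\in[d-1,d]$ and $t\in[\frac{d-1}2+s-1,3\cdot\frac{d-1}2]$, then for every $i\in[0,\frac{d-1}2-1]$: $h_{A^{(2)}}(i)=i+1$, $h_{A^{(1)}}(i)=2i+1$, and $h_A(0)=1$, $h_A(i)=3i$ for $i\ge1$.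
   Context: $x,y,z$ act as $\partial/\partial X,\partial/\partial Y,\partial/\partial Z$; $\operatorname{Ann}_S(G)=\{g\in S:g\circ G=0\}$. $\ell^k=0$ in $A$ means $\ell^k\circ F=0$. $A^{(i)}:=S/\operatorname{Ann}_S(\ell^i\circ F)$; $h_B(j)=\dim_{\mathsf{k}}B_j$. Intervals $[a,b]$ denote sets of integers. *)

theory Defs
  imports "HOL-Computational_Algebra.Polynomial"
begin

text \<open>Trivariate polynomials k[X,Y,Z] (resp. k[x,y,z]) are represented as nested
univariate polynomials: Z is the outermost variable, X the innermost.\<close>

type_synonym 'a poly3 = "'a poly poly poly"

definition coeff3 :: "'a::zero poly3 \<Rightarrow> nat \<Rightarrow> nat \<Rightarrow> nat \<Rightarrow> 'a" where
  "coeff3 p a b c = coeff (coeff (coeff p c) b) a"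

definition cscale :: "'a::comm_ring_1 \<Rightarrow> 'a poly3 \<Rightarrow> 'a poly3" where
  "cscale k p = smult [:[:k:]:] p"

text \<open>Homogeneous of degree j (the zero polynomial is homogeneous of every degree).\<close>
definition homog :: "nat \<Rightarrow> 'a::zero poly3 \<Rightarrow> bool" where
  "homog j p \<longleftrightarrow> (\<forall>a b c. coeff3 p a b c \<noteq> 0 \<longrightarrow> a + b + c = j)"

definition graded :: "nat \<Rightarrow> 'a::zero poly3 set" where
  "graded j = {p. homog j p}"

definition dX :: "'a::idom poly3 \<Rightarrow> 'a poly3" where
  "dX F = map_poly (map_poly pderiv) F"
definition dY :: "'a::idom poly3 \<Rightarrow> 'a poly3" where
  "dY F = map_poly pderiv F"
definition dZ :: "'a::idom poly3 \<Rightarrow> 'a poly3" where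
  "dZ F = pderiv F"

definition act :: "'a::idom poly3 \<Rightarrow> 'a poly3 \<Rightarrow> 'a poly3" where
  "act g F = (\<Sum>c\<le>degree g. \<Sum>b\<le>degree (coeff g c). \<Sum>a\<le>degree (coeff (coeff g c) b).
      cscale (coeff3 g a b c) ((dX ^^ a) ((dY ^^ b) ((dZ ^^ c) F))))"

definition Ann :: "'a::idom poly3 \<Rightarrow> 'a poly3 set" where
  "Ann G = {g. act g G = 0}"

definition kdim :: "'a::field poly3 set \<Rightarrow> nat" where
  "kdim V = vector_space.dim cscale V"

definition hilb :: "'a::field poly3 \<Rightarrow> nat \<Rightarrow> nat" where
  "hilb G j = kdim (graded j :: 'a poly3 set) - kdim (graded j \<inter> Ann G)"

end

theory Submission
  imports Defs
begin

text \<open>We work on the dual side: \<open>h\<^sub>G(k)\<close> is the dimension of the span of the \<open>k\<close>-th partial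
  derivatives of \<open>G\<close>, and it is symmetric about \<open>deg G\<close>. Rank-nullity for \<open>\<ell>\<close> on these
  derivatives splits \<open>h\<^sub>G(i) = b\<^sub>G(i) + h\<^bsub>\<ell>\<circ>G\<^esub>(i - 1)\<close>, where \<open>b\<^sub>G(i)\<close> counts the kernel of \<open>\<ell>\<close>.
  That kernel consists of forms in the two variables dual to \<open>S/(\<ell>)\<close>, so \<open>b\<^sub>G\<close> obeys
  Macaulay's bound in two variables: \<open>b(i) \<le> i + 1\<close>, and after its first drop below
  \<open>i + 1\<close> it is non-increasing. Applied to \<open>\<ell>\<^sup>2\<circ>F\<close> (killed by \<open>\<ell>\<close>), \<open>\<ell>\<circ>F\<close> and \<open>F\<close>, whose
  Hilbert functions are symmetric about \<open>2m - 1\<close>, \<open>2m\<close>, \<open>2m + 1\<close>, symmetry against a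
  non-increasing tail forces each \<open>b\<close> to be \<open>min (i + 1) (b m)\<close>, with a single exceptional
  pattern when \<open>t = 3r\<close>; summing up gives the listed Hilbert functions.\<close>

lemma poly3_eqI:
  assumes "\<And>a b c. coeff3 p a b c = coeff3 q a b c" shows "p = q"
  using assms unfolding coeff3_def by (auto simp: poly_eq_iff)

lemma coeff3_0 [simp]: "coeff3 0 a b c = 0"
  by (simp add: coeff3_def)

lemma coeff3_add [simp]: "coeff3 (p + q) a b c = coeff3 p a b c + coeff3 q a b c"
  by (simp add: coeff3_def)

lemma coeff3_cscale [simp]: "coeff3 (cscale k p) a b c = k * coeff3 p a b c"
  by (simp add: coeff3_def cscale_def)

lemma coeff3_sum: "coeff3 (sum f S) a b c = (\<Sum>x\<in>S. coeff3 (f x) a b c)"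
  by (induction S rule: infinite_finite_induct) auto

lemma cscale_0_right [simp]: "cscale k 0 = 0"
  by (simp add: cscale_def)

lemma cscale_add_right: "cscale k (p + q) = cscale k p + cscale k q"
  by (simp add: cscale_def smult_add_right)

lemma cscale_add_left: "cscale (k + l) p = cscale k p + cscale l p"
  by (rule poly3_eqI) (simp add: algebra_simps)

lemma cscale_cscale: "cscale k (cscale l p) = cscale (k * l) (p :: 'a::comm_ring_1 poly3)"
  by (rule poly3_eqI) (simp add: algebra_simps)

lemma cscale_sum: "cscale k (sum f S) = (\<Sum>x\<in>S. cscale k (f x))"
  by (induction S rule: infinite_finite_induct) (auto simp: cscale_add_right)

lemma cscale_mult: "cscale k p * cscale l q = cscale (k * l) (p * q)"
  by (simp add: cscale_def mult.commute)

interpretation V: vector_space "cscale :: 'a::field \<Rightarrow> 'a poly3 \<Rightarrow> 'a poly3"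
  by unfold_locales (auto intro!: poly3_eqI simp: algebra_simps)

interpretation VP: vector_space_pair "cscale :: 'a::field \<Rightarrow> 'a poly3 \<Rightarrow> 'a poly3" cscale
  by unfold_locales

lemma kdim_eq_dim: "kdim = V.dim"
  by (simp add: kdim_def fun_eq_iff)

lemma linear_poly3I:
  fixes f :: "'a::field poly3 \<Rightarrow> 'a poly3"
  assumes "\<And>x y. f (x + y) = f x + f y" "\<And>c x. f (cscale c x) = cscale c (f x)"
  shows "Vector_Spaces.linear cscale cscale f"
  using assms by (simp add: Vector_Spaces.linear_iff V.vector_space_axioms)

subsection \<open>Partial derivatives\<close>

lemma coeff3_dX: "coeff3 (dX F) a b c = of_nat (Suc a) * coeff3 F (Suc a) b c"
  by (simp add: coeff3_def dX_def coeff_map_poly coeff_pderiv)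

lemma coeff3_dY: "coeff3 (dY F) a b c = of_nat (Suc b) * coeff3 F a (Suc b) c"
  by (simp add: coeff3_def dY_def coeff_map_poly coeff_pderiv of_nat_poly)

lemma coeff3_dZ: "coeff3 (dZ F) a b c = of_nat (Suc c) * coeff3 F a b (Suc c)"
  by (simp add: coeff3_def dZ_def coeff_map_poly coeff_pderiv of_nat_poly)

lemma coeff3_dX_pow:
  "of_nat (fact a) * coeff3 ((dX ^^ k) F) a b c = of_nat (fact (a + k)) * coeff3 F (a + k) b c"
proof (induction k arbitrary: a)
  case (Suc k)
  have "of_nat (fact a) * coeff3 ((dX ^^ Suc k) F) a b c
      = of_nat (fact (Suc a)) * coeff3 ((dX ^^ k) F) (Suc a) b c"
    by (simp add: coeff3_dX algebra_simps)
  then show ?case using Suc.IH[of "Suc a"] by simp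
qed simp

lemma coeff3_dY_pow:
  "of_nat (fact b) * coeff3 ((dY ^^ k) F) a b c = of_nat (fact (b + k)) * coeff3 F a (b + k) c"
proof (induction k arbitrary: b)
  case (Suc k)
  have "of_nat (fact b) * coeff3 ((dY ^^ Suc k) F) a b c
      = of_nat (fact (Suc b)) * coeff3 ((dY ^^ k) F) a (Suc b) c"
    by (simp add: coeff3_dY algebra_simps)
  then show ?case using Suc.IH[of "Suc b"] by simp
qed simp

lemma coeff3_dZ_pow:
  "of_nat (fact c) * coeff3 ((dZ ^^ k) F) a b c = of_nat (fact (c + k)) * coeff3 F a b (c + k)"
proof (induction k arbitrary: c)
  case (Suc k)
  have "of_nat (fact c) * coeff3 ((dZ ^^ Suc k) F) a b c
      = of_nat (fact (Suc c)) * coeff3 ((dZ ^^ k) F) a b (Suc c)"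
    by (simp add: coeff3_dZ algebra_simps)
  then show ?case using Suc.IH[of "Suc c"] by simp
qed simp

definition pderiv3 :: "nat \<Rightarrow> nat \<Rightarrow> nat \<Rightarrow> 'a::idom poly3 \<Rightarrow> 'a poly3" where
  "pderiv3 a b c F = (dX ^^ a) ((dY ^^ b) ((dZ ^^ c) F))"

lemma coeff3_pderiv3_fact:
  "of_nat (fact a * fact b * fact c) * coeff3 (pderiv3 a' b' c' F) a b c
   = of_nat (fact (a + a') * fact (b + b') * fact (c + c')) * coeff3 F (a + a') (b + b') (c + c')"
proof -
  have "of_nat (fact a * fact b * fact c) * coeff3 (pderiv3 a' b' c' F) a b c
     = of_nat (fact b * fact c) * (of_nat (fact a) * coeff3 ((dX ^^ a') ((dY ^^ b') ((dZ ^^ c') F))) a b c)"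
    by (simp add: pderiv3_def algebra_simps)
  also have "\<dots> = of_nat (fact (a + a')) * of_nat (fact c)
      * (of_nat (fact b) * coeff3 ((dY ^^ b') ((dZ ^^ c') F)) (a + a') b c)"
    by (simp only: coeff3_dX_pow) (simp add: algebra_simps)
  also have "\<dots> = of_nat (fact (a + a')) * of_nat (fact (b + b'))
      * (of_nat (fact c) * coeff3 ((dZ ^^ c') F) (a + a') (b + b') c)"
    by (simp only: coeff3_dY_pow) (simp add: algebra_simps)
  also have "\<dots> = of_nat (fact (a + a')) * of_nat (fact (b + b'))
      * (of_nat (fact (c + c')) * coeff3 F (a + a') (b + b') (c + c'))"
    by (simp only: coeff3_dZ_pow)
  finally show ?thesis by (simp add: algebra_simps)
qed

lemma coeff3_pderiv3:
  fixes F :: "'a::field_char_0 poly3"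
  shows "coeff3 (pderiv3 a' b' c' F) a b c
   = of_nat (fact (a + a') * fact (b + b') * fact (c + c')) / of_nat (fact a * fact b * fact c)
       * coeff3 F (a + a') (b + b') (c + c')"
  using coeff3_pderiv3_fact[of a b c a' b' c' F] by (simp add: field_simps)

lemma pderiv3_add [simp]: "pderiv3 a b c (p + q) = pderiv3 a b c p + pderiv3 a b c (q::'a::field_char_0 poly3)"
  by (rule poly3_eqI) (simp add: coeff3_pderiv3 distrib_left add_divide_distrib)

lemma pderiv3_cscale [simp]:
  "pderiv3 a b c (cscale k p) = cscale k (pderiv3 a b c (p::'a::field_char_0 poly3))"
  by (rule poly3_eqI) (simp add: coeff3_pderiv3 algebra_simps)

lemma pderiv3_0 [simp]: "pderiv3 a b c (0::'a::field_char_0 poly3) = 0"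
  by (rule poly3_eqI) (simp add: coeff3_pderiv3)

lemma pderiv3_sum: "pderiv3 a b c (sum f S) = (\<Sum>x\<in>S. pderiv3 a b c (f x :: 'a::field_char_0 poly3))"
  by (induction S rule: infinite_finite_induct) auto

lemma pderiv3_000 [simp]: "pderiv3 0 0 0 F = F"
  by (simp add: pderiv3_def)

lemma linear_pderiv3: "Vector_Spaces.linear cscale cscale (pderiv3 a b c :: 'a::field_char_0 poly3 \<Rightarrow> _)"
  by (rule linear_poly3I) auto

lemma pderiv3_pderiv3:
  fixes F :: "'a::field_char_0 poly3"
  shows "pderiv3 a b c (pderiv3 a' b' c' F) = pderiv3 (a + a') (b + b') (c + c') F"
proof (rule poly3_eqI)
  fix x y z
  have "of_nat (fact x * fact y * fact z) * coeff3 (pderiv3 a b c (pderiv3 a' b' c' F)) x y z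
     = of_nat (fact x * fact y * fact z) * coeff3 (pderiv3 (a + a') (b + b') (c + c') F) x y z"
    by (simp only: coeff3_pderiv3_fact add.assoc)
  then show "coeff3 (pderiv3 a b c (pderiv3 a' b' c' F)) x y z
      = coeff3 (pderiv3 (a + a') (b + b') (c + c') F) x y z"
    by simp
qed

lemma pderiv3_commute: "pderiv3 a b c (pderiv3 a' b' c' F) = pderiv3 a' b' c' (pderiv3 a b c (F::'a::field_char_0 poly3))"
  by (simp add: pderiv3_pderiv3 add.commute)

lemma homog_pderiv3:
  fixes F :: "'a::field_char_0 poly3"
  assumes "homog n F"
  shows "homog (n - (a + b + c)) (pderiv3 a b c F)"
    and "a + b + c > n \<Longrightarrow> pderiv3 a b c F = 0"
proof -
  have key: "coeff3 (pderiv3 a b c F) x y z \<noteq> 0 \<Longrightarrow> x + a + (y + b) + (z + c) = n" for x y z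
    using assms unfolding homog_def by (auto simp: coeff3_pderiv3)
  show "homog (n - (a + b + c)) (pderiv3 a b c F)"
    unfolding homog_def using key by fastforce
  show "a + b + c > n \<Longrightarrow> pderiv3 a b c F = 0"
    using key by (intro poly3_eqI) fastforce
qed

lemma homog_eq_0_if_pderiv3_eq_0:
  fixes H :: "'a::field_char_0 poly3"
  assumes "homog n H" and "\<And>a b c. a + b + c = n \<Longrightarrow> pderiv3 a b c H = 0"
  shows "H = 0"
proof (rule poly3_eqI)
  fix a b c
  show "coeff3 H a b c = coeff3 0 a b c"
  proof (cases "a + b + c = n")
    case True
    then show ?thesis
      using coeff3_pderiv3_fact[of 0 0 0 a b c H] assms(2)[OF True] by simp
  next
    case False
    then show ?thesis using assms(1) unfolding homog_def by auto
  qed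
qed

lemma homog_eq_0_if_first_pderiv3_eq_0:
  fixes H :: "'a::field_char_0 poly3"
  assumes H: "homog n H" "n \<ge> 1"
    and "pderiv3 1 0 0 H = 0" "pderiv3 0 1 0 H = 0" "pderiv3 0 0 1 H = 0"
  shows "H = 0"
proof (rule homog_eq_0_if_pderiv3_eq_0[OF H(1)])
  fix a b c assume "a + b + c = n"
  then consider (X) a' where "a = a' + 1" | (Y) b' where "b = b' + 1" | (Z) c' where "c = c' + 1"
    using H(2) by (metis add_eq_0_iff_both_eq_0 not_one_le_zero Suc_eq_plus1 not0_implies_Suc)
  then show "pderiv3 a b c H = 0"
  proof cases
    case X
    then show ?thesis using pderiv3_pderiv3[of a' b c 1 0 0 H] assms(3) by simp
  next
    case Y
    then show ?thesis using pderiv3_pderiv3[of a b' c 0 1 0 H] assms(4) by simp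
  next
    case Z
    then show ?thesis using pderiv3_pderiv3[of a b c' 0 0 1 H] assms(5) by simp
  qed
qed

subsection \<open>The contraction action\<close>

definition coeff3_bounded :: "'a::zero poly3 \<Rightarrow> nat \<Rightarrow> bool" where
  "coeff3_bounded g N \<longleftrightarrow> (\<forall>a b c. coeff3 g a b c \<noteq> 0 \<longrightarrow> a \<le> N \<and> b \<le> N \<and> c \<le> N)"

lemma coeff3_bounded_mono: "coeff3_bounded g N \<Longrightarrow> N \<le> M \<Longrightarrow> coeff3_bounded g M"
  unfolding coeff3_bounded_def by force

lemma coeff3_bounded_homog: "homog n g \<Longrightarrow> coeff3_bounded g n"
  unfolding coeff3_bounded_def homog_def by force

lemma coeff3_bounded_add: "coeff3_bounded p N \<Longrightarrow> coeff3_bounded q N \<Longrightarrow> coeff3_bounded (p + q) N"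
  unfolding coeff3_bounded_def by (metis add.right_neutral coeff3_add)

lemma coeff3_bounded_cscale: "coeff3_bounded p N \<Longrightarrow> coeff3_bounded (cscale k p) N"
  unfolding coeff3_bounded_def by (metis coeff3_cscale mult_zero_right)

lemma coeff3_bounded_exists: "\<exists>N. coeff3_bounded (g::'a::zero poly3) N"
proof -
  define N where "N = degree g + (\<Sum>c\<le>degree g. degree (coeff g c))
      + (\<Sum>c\<le>degree g. \<Sum>b\<le>degree (coeff g c). degree (coeff (coeff g c) b))"
  have "coeff3_bounded g N" unfolding coeff3_bounded_def
  proof (intro allI impI)
    fix a b c assume nz: "coeff3 g a b c \<noteq> 0"
    then have c: "c \<le> degree g" unfolding coeff3_def by (metis coeff_0 le_degree)
    from nz have b: "b \<le> degree (coeff g c)" unfolding coeff3_def by (metis coeff_0 le_degree)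
    from nz have a: "a \<le> degree (coeff (coeff g c) b)" unfolding coeff3_def by (metis le_degree)
    have "degree (coeff g c) \<le> (\<Sum>c\<le>degree g. degree (coeff g c))"
      by (rule member_le_sum) (use c in auto)
    moreover have "degree (coeff (coeff g c) b) \<le> (\<Sum>b\<le>degree (coeff g c). degree (coeff (coeff g c) b))"
      by (rule member_le_sum) (use b in auto)
    moreover have "(\<Sum>b\<le>degree (coeff g c). degree (coeff (coeff g c) b)) \<le>
       (\<Sum>c\<le>degree g. \<Sum>b\<le>degree (coeff g c). degree (coeff (coeff g c) b))"
      by (rule member_le_sum[where f = "\<lambda>c. \<Sum>b\<le>degree (coeff g c). degree (coeff (coeff g c) b)"])
        (use c in auto)
    ultimately show "a \<le> N \<and> b \<le> N \<and> c \<le> N" using a b c unfolding N_def by linarith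
  qed
  then show ?thesis by blast
qed

lemma sum_atMost_cong_neutral:
  assumes "\<And>i. i > M \<Longrightarrow> f i = 0" "\<And>i. i > N \<Longrightarrow> f i = 0"
  shows "sum f {..M} = sum f {..(N::nat)}"
proof -
  have "sum f {..M} = sum f {..max M N}"
    by (rule sum.mono_neutral_left) (auto simp: assms)
  also have "\<dots> = sum f {..N}"
    by (rule sum.mono_neutral_right) (auto simp: assms)
  finally show ?thesis .
qed

lemma act_box:
  fixes g F :: "'a::field_char_0 poly3"
  assumes "coeff3_bounded g N"
  shows "act g F = (\<Sum>c\<le>N. \<Sum>b\<le>N. \<Sum>a\<le>N. cscale (coeff3 g a b c) (pderiv3 a b c F))"
proof -
  have N: "coeff3 g a b c = 0" if "a > N \<or> b > N \<or> c > N" for a b c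
    using assms that by (force simp: coeff3_bounded_def)
  have D: "coeff3 g a b c = 0"
    if "a > degree (coeff (coeff g c) b) \<or> b > degree (coeff g c) \<or> c > degree g" for a b c
    using that by (auto simp: coeff3_def coeff_eq_0)
  have inner: "(\<Sum>a\<le>degree (coeff (coeff g c) b). cscale (coeff3 g a b c) (pderiv3 a b c F))
      = (\<Sum>a\<le>N. cscale (coeff3 g a b c) (pderiv3 a b c F))" for b c
    by (rule sum_atMost_cong_neutral) (simp_all add: N D)
  have mid: "(\<Sum>b\<le>degree (coeff g c). \<Sum>a\<le>N. cscale (coeff3 g a b c) (pderiv3 a b c F))
      = (\<Sum>b\<le>N. \<Sum>a\<le>N. cscale (coeff3 g a b c) (pderiv3 a b c F))" for c
    by (rule sum_atMost_cong_neutral) (simp_all add: N D)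
  have outer: "(\<Sum>c\<le>degree g. \<Sum>b\<le>N. \<Sum>a\<le>N. cscale (coeff3 g a b c) (pderiv3 a b c F))
      = (\<Sum>c\<le>N. \<Sum>b\<le>N. \<Sum>a\<le>N. cscale (coeff3 g a b c) (pderiv3 a b c F))"
    by (rule sum_atMost_cong_neutral) (simp_all add: N D)
  show ?thesis
    unfolding act_def pderiv3_def[symmetric] inner mid outer ..
qed

lemma sum_box_delta:
  "(\<Sum>c\<le>N. \<Sum>b\<le>N. \<Sum>a\<le>(N::nat). if a = x \<and> b = y \<and> c = z then f a b c else 0)
   = (if x \<le> N \<and> y \<le> N \<and> z \<le> N then f x y z else 0)"
proof -
  have i: "(\<Sum>a\<le>N. if a = x \<and> b = y \<and> c = z then f a b c else 0)
      = (if x \<le> N \<and> b = y \<and> c = z then f x b c else 0)" for b c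
    by (cases "b = y \<and> c = z") auto
  have m: "(\<Sum>b\<le>N. if x \<le> N \<and> b = y \<and> c = z then f x b c else 0)
      = (if x \<le> N \<and> y \<le> N \<and> c = z then f x y c else 0)" for c
    by (cases "x \<le> N \<and> c = z") auto
  have o: "(\<Sum>c\<le>N. if x \<le> N \<and> y \<le> N \<and> c = z then f x y c else 0)
      = (if x \<le> N \<and> y \<le> N \<and> z \<le> N then f x y z else 0)"
    by (cases "x \<le> N \<and> y \<le> N") auto
  show ?thesis unfolding i m o ..
qed

definition monom3 :: "nat \<Rightarrow> nat \<Rightarrow> nat \<Rightarrow> 'a::field poly3" where
  "monom3 a b c = monom (monom (monom 1 a) b) c"

lemma coeff3_monom3: "coeff3 (monom3 a b c) a' b' c' = (if a' = a \<and> b' = b \<and> c' = c then 1 else 0)"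
  by (auto simp: monom3_def coeff3_def)

lemma monom3_mult: "monom3 a b c * monom3 a' b' c' = monom3 (a + a') (b + b') (c + c')"
  by (simp add: monom3_def mult_monom)

lemma homog_monom3: "homog (a + b + c) (monom3 a b c)"
  unfolding homog_def by (auto simp: coeff3_monom3)

lemma act_monom3:
  fixes F :: "'a::field_char_0 poly3"
  shows "act (monom3 a b c) F = pderiv3 a b c F"
proof -
  define N where "N = max a (max b c)"
  have bounded: "coeff3_bounded (monom3 a b c) N"
    unfolding coeff3_bounded_def N_def by (auto simp: coeff3_monom3)
  have "act (monom3 a b c) F = (\<Sum>c'\<le>N. \<Sum>b'\<le>N. \<Sum>a'\<le>N.
      (if a' = a \<and> b' = b \<and> c' = c then pderiv3 a' b' c' F else 0))"
    unfolding act_box[OF bounded] by (intro sum.cong refl) (auto simp: coeff3_monom3)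
  also have "\<dots> = pderiv3 a b c F"
    by (simp only: sum_box_delta) (simp add: N_def le_max_iff_disj)
  finally show ?thesis .
qed

lemma monom3_expansion:
  fixes g :: "'a::field poly3"
  assumes "coeff3_bounded g N"
  shows "g = (\<Sum>c\<le>N. \<Sum>b\<le>N. \<Sum>a\<le>N. cscale (coeff3 g a b c) (monom3 a b c))"
proof (rule poly3_eqI)
  fix x y z
  have "coeff3 (\<Sum>c\<le>N. \<Sum>b\<le>N. \<Sum>a\<le>N. cscale (coeff3 g a b c) (monom3 a b c)) x y z
      = (\<Sum>c\<le>N. \<Sum>b\<le>N. \<Sum>a\<le>N. (if a = x \<and> b = y \<and> c = z then coeff3 g a b c else 0))"
    by (simp add: coeff3_sum coeff3_monom3) (intro sum.cong refl; auto)
  also have "\<dots> = coeff3 g x y z"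
    using assms unfolding sum_box_delta coeff3_bounded_def by auto
  finally show "coeff3 g x y z
      = coeff3 (\<Sum>c\<le>N. \<Sum>b\<le>N. \<Sum>a\<le>N. cscale (coeff3 g a b c) (monom3 a b c)) x y z"
    by simp
qed

lemma act_add_right: "act g (p + q) = act g p + act g (q :: 'a::field_char_0 poly3)"
proof -
  obtain N where "coeff3_bounded g N" using coeff3_bounded_exists by blast
  then show ?thesis by (simp add: act_box cscale_add_right sum.distrib)
qed

lemma act_cscale_right: "act g (cscale k p) = cscale k (act g (p :: 'a::field_char_0 poly3))"
proof -
  obtain N where "coeff3_bounded g N" using coeff3_bounded_exists by blast
  then show ?thesis by (simp add: act_box cscale_cscale cscale_sum mult.commute)
qed

lemma act_0_right [simp]: "act g (0 :: 'a::field_char_0 poly3) = 0"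
  using act_add_right[of g 0 0] by simp

lemma act_add_left: "act (p + q) F = act p F + act q (F :: 'a::field_char_0 poly3)"
proof -
  obtain N1 N2 where "coeff3_bounded p N1" "coeff3_bounded q N2"
    using coeff3_bounded_exists by meson
  then have p: "coeff3_bounded p (max N1 N2)" and q: "coeff3_bounded q (max N1 N2)"
    by (meson coeff3_bounded_mono max.cobounded1 max.cobounded2)+
  show ?thesis unfolding act_box[OF p] act_box[OF q] act_box[OF coeff3_bounded_add[OF p q]]
    by (simp add: cscale_add_left sum.distrib)
qed

lemma act_cscale_left: "act (cscale k p) F = cscale k (act p (F :: 'a::field_char_0 poly3))"
proof -
  obtain N where N: "coeff3_bounded p N" using coeff3_bounded_exists by blast
  show ?thesis unfolding act_box[OF N] act_box[OF coeff3_bounded_cscale[OF N]]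
    by (simp add: cscale_cscale cscale_sum)
qed

lemma act_0_left [simp]: "act 0 (F :: 'a::field_char_0 poly3) = 0"
  using act_add_left[of 0 0 F] by simp

lemma act_sum_left: "act (sum f S) F = (\<Sum>x\<in>S. act (f x) (F :: 'a::field_char_0 poly3))"
  by (induction S rule: infinite_finite_induct) (auto simp: act_add_left)

lemma linear_act_left: "Vector_Spaces.linear cscale cscale (\<lambda>g. act g (G::'a::field_char_0 poly3))"
  by (rule linear_poly3I) (auto simp: act_add_left act_cscale_left)

lemma linear_act_right: "Vector_Spaces.linear cscale cscale (act (g::'a::field_char_0 poly3))"
  by (rule linear_poly3I) (auto simp: act_add_right act_cscale_right)

lemma act_pderiv3_commute: "act g (pderiv3 a b c F) = pderiv3 a b c (act g (F :: 'a::field_char_0 poly3))"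
proof -
  obtain N where "coeff3_bounded g N" using coeff3_bounded_exists by blast
  then show ?thesis by (simp add: act_box pderiv3_sum pderiv3_commute)
qed

lemma act_mult: "act (p * q) F = act p (act q (F :: 'a::field_char_0 poly3))"
proof -
  \<comment> \<open>expanding \<open>q * p\<close> makes the sixfold sum match \<open>act p (act q F)\<close> term by term\<close>
  obtain N1 N2 where "coeff3_bounded p N1" "coeff3_bounded q N2"
    using coeff3_bounded_exists by meson
  then have p: "coeff3_bounded p (max N1 N2)" and q: "coeff3_bounded q (max N1 N2)"
    by (meson coeff3_bounded_mono max.cobounded1 max.cobounded2)+
  define N where "N = max N1 N2"
  have "q * p = (\<Sum>c'\<le>N. \<Sum>b'\<le>N. \<Sum>a'\<le>N. \<Sum>c\<le>N. \<Sum>b\<le>N. \<Sum>a\<le>N.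
       cscale (coeff3 q a b c * coeff3 p a' b' c') (monom3 (a + a') (b + b') (c + c')))"
    by (subst monom3_expansion[OF q], subst monom3_expansion[OF p])
      (simp add: N_def sum_distrib_left sum_distrib_right cscale_mult monom3_mult)
  then have "act (q * p) F = (\<Sum>c'\<le>N. \<Sum>b'\<le>N. \<Sum>a'\<le>N. \<Sum>c\<le>N. \<Sum>b\<le>N. \<Sum>a\<le>N.
       cscale (coeff3 q a b c * coeff3 p a' b' c') (pderiv3 (a + a') (b + b') (c + c') F))"
    by (simp add: act_sum_left act_cscale_left act_monom3)
  also have "\<dots> = act p (act q F)"
    unfolding act_box[OF p] act_box[OF q] N_def
    by (simp add: pderiv3_sum cscale_sum pderiv3_pderiv3 cscale_cscale mult.commute add.commute)
  finally show ?thesis by (simp add: mult.commute)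
qed

subsection \<open>Finite-dimensional subspaces\<close>

context vector_space
begin

definition fin_dim :: "'b set \<Rightarrow> bool" where
  "fin_dim S \<longleftrightarrow> (\<exists>B. finite B \<and> S \<subseteq> span B)"

lemma fin_dim_subset: "local.fin_dim T \<Longrightarrow> S \<subseteq> T \<Longrightarrow> local.fin_dim S"
  unfolding fin_dim_def by blast

lemma fin_dim_span: "finite B \<Longrightarrow> local.fin_dim (span B)"
  unfolding fin_dim_def by blast

lemma fin_dim_obtain_basis:
  assumes "local.fin_dim S"
  obtains B where "B \<subseteq> S" "finite B" "independent B" "S \<subseteq> span B" "card B = dim S"
proof -
  obtain B0 where B0: "finite B0" "S \<subseteq> span B0" using assms unfolding fin_dim_def by blast
  obtain B where B: "B \<subseteq> S" "independent B" "S \<subseteq> span B"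
    using maximal_independent_subset by blast
  moreover have "finite B" using independent_span_bound[OF B0(1) B(2)] B(1) B0(2) by blast
  moreover have "card B = dim S" using basis_card_eq_dim B by blast
  ultimately show ?thesis using that by blast
qed

lemma dim_subset_fin_dim:
  assumes "local.fin_dim T" "S \<subseteq> T"
  shows "dim S \<le> dim T"
proof -
  obtain BT where BT: "finite BT" "T \<subseteq> span BT" "card BT = dim T"
    using fin_dim_obtain_basis[OF assms(1)] by metis
  obtain BS where BS: "BS \<subseteq> S" "independent BS" "S \<subseteq> span BS"
    using maximal_independent_subset by blast
  have "card BS \<le> card BT"
    using independent_span_bound[OF BT(1) BS(2)] BS(1) assms(2) BT(2) by blast
  moreover have "card BS = dim S" using basis_card_eq_dim BS by blast
  ultimately show ?thesis using BT(3) by simp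
qed

lemma dim_subset_zero: "S \<subseteq> {0} \<Longrightarrow> dim S = 0"
  using dim_le_card[of S "{}"] by auto

lemma dim_singleton_nonzero: "x \<noteq> 0 \<Longrightarrow> dim {x} = 1"
  using basis_card_eq_dim[of "{x}" "{x}"] dependent_single[of x] by (simp add: span_base)

end

context vector_space_pair
begin

lemma fin_dim_image:
  assumes lin: "Vector_Spaces.linear s1 s2 f" and fd: "vs1.fin_dim S"
  shows "vs2.fin_dim (f ` S)"
proof -
  obtain B0 where "finite B0" "S \<subseteq> vs1.span B0" using fd unfolding vs1.fin_dim_def by blast
  then have "finite (f ` B0)" "f ` S \<subseteq> vs2.span (f ` B0)"
    using linear_span_image[OF lin, of B0] by auto
  then show ?thesis unfolding vs2.fin_dim_def by blast
qed

lemma subspace_kernel_on: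
  "Vector_Spaces.linear s1 s2 f \<Longrightarrow> vs1.subspace S \<Longrightarrow> vs1.subspace {x\<in>S. f x = 0}"
  using vs1.subspace_inter[of S "{x. f x = 0}"] linear_subspace_kernel by (simp add: Int_def)

lemma dim_image_add_dim_kernel_le:
  assumes lin: "Vector_Spaces.linear s1 s2 f" and fd: "vs1.fin_dim S"
  shows "vs1.dim {x\<in>S. f x = 0} + vs2.dim (f ` S) \<le> vs1.dim S"
proof -
  define K where "K = {x\<in>S. f x = 0}"
  obtain BK where BK: "BK \<subseteq> K" "vs1.independent BK" "K \<subseteq> vs1.span BK"
    using vs1.maximal_independent_subset by blast
  have "BK \<subseteq> S" using BK(1) by (auto simp: K_def)
  then obtain B where B: "BK \<subseteq> B" "B \<subseteq> S" "vs1.independent B" "S \<subseteq> vs1.span B"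
    using vs1.maximal_independent_subset_extend[OF _ BK(2)] by blast
  obtain B0 where B0: "finite B0" "S \<subseteq> vs1.span B0" using fd unfolding vs1.fin_dim_def by blast
  have fB: "finite B" using vs1.independent_span_bound[OF B0(1) B(3)] B(2) B0(2) by blast
  have fBK: "finite BK" using B(1) fB finite_subset by blast
  have "f ` B \<subseteq> insert 0 (f ` (B - BK))" using BK(1) by (auto simp: K_def)
  also have "\<dots> \<subseteq> vs2.span (f ` (B - BK))" by (simp add: vs2.span_zero vs2.span_superset)
  finally have "vs2.span (f ` B) \<subseteq> vs2.span (f ` (B - BK))" by (rule vs2.span_minimal) simp
  moreover have "f ` S \<subseteq> vs2.span (f ` B)"
    using B(4) linear_span_image[OF lin, of B] by blast
  ultimately have "vs2.dim (f ` S) \<le> card (f ` (B - BK))"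
    using vs2.dim_le_card[of "f ` S" "f ` (B - BK)"] fB by blast
  also have "\<dots> \<le> card B - card BK"
    using card_image_le[of "B - BK" f] card_Diff_subset[OF fBK B(1)] fB by simp
  finally have "vs2.dim (f ` S) \<le> card B - card BK" .
  moreover have "card B = vs1.dim S" using vs1.basis_card_eq_dim B(2,3,4) by blast
  moreover have "card BK = vs1.dim K" using vs1.basis_card_eq_dim BK by blast
  moreover have "card BK \<le> card B" using card_mono[OF fB B(1)] .
  ultimately show ?thesis unfolding K_def by linarith
qed

lemma dim_le_dim_kernel_add_dim_image:
  assumes lin: "Vector_Spaces.linear s1 s2 f" and S: "vs1.subspace S" and fd: "vs1.fin_dim S"
  shows "vs1.dim S \<le> vs1.dim {x\<in>S. f x = 0} + vs2.dim (f ` S)"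
proof -
  define K where "K = {x\<in>S. f x = 0}"
  have "vs1.fin_dim K" by (rule vs1.fin_dim_subset[OF fd]) (auto simp: K_def)
  then obtain BK where BK: "finite BK" "K \<subseteq> vs1.span BK" "card BK = vs1.dim K"
    using vs1.fin_dim_obtain_basis by metis
  obtain D where D: "D \<subseteq> f ` S" "finite D" "f ` S \<subseteq> vs2.span D" "card D = vs2.dim (f ` S)"
    using vs2.fin_dim_obtain_basis[OF fin_dim_image[OF lin fd]] by metis
  have "\<forall>d\<in>D. \<exists>x\<in>S. f x = d" using D(1) by blast
  then obtain p where p: "\<And>d. d \<in> D \<Longrightarrow> p d \<in> S \<and> f (p d) = d" by metis
  have "S \<subseteq> vs1.span (BK \<union> p ` D)"
  proof
    fix x assume x: "x \<in> S"
    then obtain c where c: "f x = (\<Sum>d\<in>D. c d *b d)"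
      using D(3) vs2.span_finite[OF D(2)] by blast
    define w where "w = (\<Sum>d\<in>D. c d *a p d)"
    have w: "w \<in> vs1.span (BK \<union> p ` D)"
      unfolding w_def by (intro vs1.span_sum vs1.span_scale vs1.span_base) auto
    have "w \<in> S" unfolding w_def
      by (intro vs1.subspace_sum[OF S] vs1.subspace_scale[OF S]) (use p in auto)
    moreover have "f w = f x"
      using c p by (simp add: w_def linear_sum[OF lin] linear_scale[OF lin])
    ultimately have "x - w \<in> K"
      using x vs1.subspace_diff[OF S] by (simp add: K_def linear_diff[OF lin])
    then have "x - w \<in> vs1.span (BK \<union> p ` D)"
      using BK(2) vs1.span_mono[of BK "BK \<union> p ` D"] by blast
    then have "(x - w) + w \<in> vs1.span (BK \<union> p ` D)" using w vs1.span_add by blast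
    then show "x \<in> vs1.span (BK \<union> p ` D)" by simp
  qed
  then have "vs1.dim S \<le> card (BK \<union> p ` D)" using vs1.dim_le_card BK(1) D(2) by blast
  also have "\<dots> \<le> card BK + card D"
    using card_Un_le[of BK "p ` D"] card_image_le[OF D(2), of p] by linarith
  finally show ?thesis using BK(3) D(4) unfolding K_def by simp
qed

lemma rank_nullity:
  assumes "Vector_Spaces.linear s1 s2 f" "vs1.subspace S" "vs1.fin_dim S"
  shows "vs1.dim S = vs1.dim {x\<in>S. f x = 0} + vs2.dim (f ` S)"
  using dim_image_add_dim_kernel_le[OF assms(1,3)] dim_le_dim_kernel_add_dim_image[OF assms] by simp

end

context vector_space
begin

lemma dim_le_dim_kernel_functional_add_1:
  fixes \<phi> :: "'b \<Rightarrow> 'a"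
  assumes add: "\<And>x y. \<phi> (x + y) = \<phi> x + \<phi> y" and scale: "\<And>c x. \<phi> (c *s x) = c * \<phi> x"
    and S: "subspace S" and fd: "local.fin_dim S"
  shows "dim S \<le> dim {x\<in>S. \<phi> x = 0} + 1"
proof (cases "\<exists>x1\<in>S. \<phi> x1 \<noteq> 0")
  case True
  then obtain x1 where x1: "x1 \<in> S" "\<phi> x1 \<noteq> 0" by blast
  interpret endo: vector_space_pair scale scale by unfold_locales
  define f where "f x = \<phi> x *s x1" for x
  have lin: "Vector_Spaces.linear scale scale f"
    by (simp add: Vector_Spaces.linear_iff vector_space_axioms f_def add scale scale_left_distrib)
  have "f ` S \<subseteq> span {x1}" by (auto simp: f_def intro: span_scale span_base)
  then have "dim (f ` S) \<le> 1" using dim_le_card[of "f ` S" "{x1}"] by simp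
  moreover have "x1 \<noteq> 0" using x1(2) scale[of 0 0] by auto
  then have "{x\<in>S. f x = 0} = {x\<in>S. \<phi> x = 0}" by (auto simp: f_def)
  ultimately show ?thesis using endo.rank_nullity[OF lin S fd] by simp
next
  case False
  then have "{x\<in>S. \<phi> x = 0} = S" by auto
  then show ?thesis by simp
qed

lemma dim_le_dim_common_kernel_add_card:
  fixes \<phi> :: "'c \<Rightarrow> 'b \<Rightarrow> 'a"
  assumes add: "\<And>H x y. \<phi> H (x + y) = \<phi> H x + \<phi> H y"
    and scale: "\<And>H c x. \<phi> H (c *s x) = c * \<phi> H x"
    and S: "subspace S" and fd: "local.fin_dim S" and B: "finite B"
  shows "dim S \<le> dim {x\<in>S. \<forall>H\<in>B. \<phi> H x = 0} + card B"
  using B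
proof (induction B rule: finite_induct)
  case (insert H B)
  define S' where "S' = {x\<in>S. \<forall>H\<in>B. \<phi> H x = 0}"
  have "\<phi> H' 0 = 0" for H' using scale[of H' 0 0] by simp
  then have "subspace S'" using S unfolding subspace_def S'_def by (auto simp: add scale)
  moreover have "local.fin_dim S'" by (rule fin_dim_subset[OF fd]) (auto simp: S'_def)
  ultimately have "dim S' \<le> dim {x\<in>S'. \<phi> H x = 0} + 1"
    by (intro dim_le_dim_kernel_functional_add_1) (simp_all add: add scale)
  moreover have "{x\<in>S'. \<phi> H x = 0} = {x\<in>S. \<forall>H'\<in>insert H B. \<phi> H' x = 0}"
    unfolding S'_def by auto
  ultimately show ?case using insert by (simp add: S'_def)
qed simp

end

subsection \<open>Graded pieces and the Hilbert function\<close>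

lemma homog_0 [simp]: "homog n 0"
  unfolding homog_def by simp

lemma homog_add: "homog n p \<Longrightarrow> homog n q \<Longrightarrow> homog n (p + q)"
  unfolding homog_def by (metis add.right_neutral coeff3_add)

lemma homog_cscale: "homog n p \<Longrightarrow> homog n (cscale k p)"
  unfolding homog_def by (metis coeff3_cscale mult_zero_right)

lemma subspace_graded: "V.subspace (graded n :: 'a::field poly3 set)"
  unfolding V.subspace_def graded_def using homog_add homog_cscale by auto

lemma homog_sum: "(\<And>x. x \<in> S \<Longrightarrow> homog n (f x :: 'a::field poly3)) \<Longrightarrow> homog n (sum f S)"
  using V.subspace_sum[OF subspace_graded, of S f n] by (simp add: graded_def)

lemma homog_0_eq_0_iff: "homog 0 p \<Longrightarrow> p = 0 \<longleftrightarrow> coeff3 p 0 0 0 = 0"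
  unfolding homog_def by (metis add_is_0 coeff3_0 poly3_eqI)

lemma finite_triples: "finite {(a, b, c). a + b + c = (n::nat)}"
  by (rule finite_subset[of _ "{..n} \<times> {..n} \<times> {..n}"]) auto

lemma graded_subset_span_monom3:
  "graded n \<subseteq> V.span ((\<lambda>(a, b, c). monom3 a b c) ` {(a, b, c). a + b + c = n} :: 'a::field poly3 set)"
  (is "_ \<subseteq> V.span ?M")
proof
  fix p :: "'a poly3" assume "p \<in> graded n"
  then have h: "homog n p" by (simp add: graded_def)
  have "p = (\<Sum>c\<le>n. \<Sum>b\<le>n. \<Sum>a\<le>n. cscale (coeff3 p a b c) (monom3 a b c))"
    using monom3_expansion[OF coeff3_bounded_homog[OF h]] .
  also have "\<dots> \<in> V.span ?M"
  proof (intro V.span_sum)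
    fix c b a
    show "cscale (coeff3 p a b c) (monom3 a b c) \<in> V.span ?M"
    proof (cases "coeff3 p a b c = 0")
      case False
      then have "a + b + c = n" using h unfolding homog_def by blast
      then show ?thesis by (intro V.span_scale V.span_base image_eqI[of _ _ "(a, b, c)"]) auto
    qed (simp add: V.span_zero)
  qed
  finally show "p \<in> V.span ?M" .
qed

lemma fin_dim_graded: "V.fin_dim (graded n :: 'a::field poly3 set)"
  unfolding V.fin_dim_def using graded_subset_span_monom3 finite_triples by blast

lemma dim_graded_0: "V.dim (graded 0 :: 'a::field poly3 set) \<le> 1"
proof -
  have "{(a, b, c). a + b + c = (0::nat)} = {(0, 0, 0)}" by auto
  then show ?thesis using V.dim_le_card[OF graded_subset_span_monom3[of 0]] by simp
qed

lemma act_homog: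
  fixes g G :: "'a::field_char_0 poly3"
  assumes G: "homog e G" and g: "homog k g"
  shows "homog (e - k) (act g G)" and "k > e \<Longrightarrow> act g G = 0"
proof -
  have eq: "act g G = (\<Sum>c\<le>k. \<Sum>b\<le>k. \<Sum>a\<le>k. cscale (coeff3 g a b c) (pderiv3 a b c G))"
    using act_box[OF coeff3_bounded_homog[OF g]] .
  have summand: "cscale (coeff3 g a b c) (pderiv3 a b c G) = 0 \<or>
        (homog (e - k) (cscale (coeff3 g a b c) (pderiv3 a b c G)) \<and> (k > e \<longrightarrow> pderiv3 a b c G = 0))"
    for a b c
  proof (cases "coeff3 g a b c = 0")
    case False
    then have "a + b + c = k" using g unfolding homog_def by blast
    then show ?thesis using homog_pderiv3[OF G, of a b c] homog_cscale by auto
  qed simp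
  show "homog (e - k) (act g G)" unfolding eq
    by (intro homog_sum) (metis homog_0 summand)
  show "k > e \<Longrightarrow> act g G = 0" unfolding eq
    by (intro sum.neutral ballI) (metis cscale_0_right summand)
qed

definition derivs :: "nat \<Rightarrow> 'a::field_char_0 poly3 \<Rightarrow> 'a poly3 set" where
  "derivs k G = {pderiv3 a b c G | a b c. a + b + c = k}"

lemma finite_derivs: "finite (derivs k G)"
proof (rule finite_subset[OF _ finite_imageI[OF finite_triples]])
  show "derivs k G \<subseteq> (\<lambda>(a, b, c). pderiv3 a b c G) ` {(a, b, c). a + b + c = k}"
  proof
    fix H assume "H \<in> derivs k G"
    then obtain a b c where "H = pderiv3 a b c G" "a + b + c = k" by (auto simp: derivs_def)
    then show "H \<in> (\<lambda>(a, b, c). pderiv3 a b c G) ` {(a, b, c). a + b + c = k}"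
      by (intro image_eqI[of _ _ "(a, b, c)"]) auto
  qed
qed

lemma homog_derivs:
  fixes G :: "'a::field_char_0 poly3"
  assumes "homog e G" "H \<in> derivs k G"
  shows "homog (e - k) H"
  using assms homog_pderiv3 unfolding derivs_def by blast

lemma span_derivs_subset_graded:
  fixes G :: "'a::field_char_0 poly3"
  assumes "homog e G"
  shows "V.span (derivs k G) \<subseteq> graded (e - k)"
  using homog_derivs[OF assms] by (intro V.span_minimal subspace_graded) (auto simp: graded_def)

lemma act_image_derivs: "act L ` derivs k G = derivs k (act L (G::'a::field_char_0 poly3))"
  unfolding derivs_def by (auto simp flip: act_pderiv3_commute)

lemma image_graded_eq_span_derivs:
  fixes G :: "'a::field_char_0 poly3"
  shows "(\<lambda>g. act g G) ` graded k = V.span (derivs k G)"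
proof
  show "(\<lambda>g. act g G) ` graded k \<subseteq> V.span (derivs k G)"
  proof
    fix H assume "H \<in> (\<lambda>g. act g G) ` graded k"
    then obtain g where g: "homog k g" "H = act g G" by (auto simp: graded_def)
    have "H = (\<Sum>c\<le>k. \<Sum>b\<le>k. \<Sum>a\<le>k. cscale (coeff3 g a b c) (pderiv3 a b c G))"
      using act_box[OF coeff3_bounded_homog[OF g(1)]] g(2) by simp
    also have "\<dots> \<in> V.span (derivs k G)"
    proof (intro V.span_sum)
      fix c b a
      show "cscale (coeff3 g a b c) (pderiv3 a b c G) \<in> V.span (derivs k G)"
      proof (cases "coeff3 g a b c = 0")
        case False
        then have "a + b + c = k" using g unfolding homog_def by blast
        then show ?thesis by (intro V.span_scale V.span_base) (auto simp: derivs_def)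
      qed (simp add: V.span_zero)
    qed
    finally show "H \<in> V.span (derivs k G)" .
  qed
next
  have "derivs k G \<subseteq> (\<lambda>g. act g G) ` graded k"
  proof
    fix H assume "H \<in> derivs k G"
    then obtain a b c where "H = act (monom3 a b c) G" "a + b + c = k"
      by (auto simp: derivs_def act_monom3)
    then show "H \<in> (\<lambda>g. act g G) ` graded k"
      using homog_monom3[of a b c] by (auto simp: graded_def)
  qed
  then show "V.span (derivs k G) \<subseteq> (\<lambda>g. act g G) ` graded k"
    using V.span_minimal VP.linear_subspace_image[OF linear_act_left subspace_graded] by blast
qed

lemma hilb_eq_dim_derivs: "hilb G k = V.dim (derivs k (G :: 'a::field_char_0 poly3))"
proof -
  have "V.dim (graded k :: 'a poly3 set)
      = V.dim {x\<in>graded k. act x G = 0} + V.dim ((\<lambda>g. act g G) ` graded k)"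
    by (rule VP.rank_nullity[OF linear_act_left subspace_graded fin_dim_graded])
  moreover have "{x\<in>graded k. act x G = 0} = graded k \<inter> Ann G" by (auto simp: Ann_def)
  ultimately show ?thesis
    by (simp add: hilb_def kdim_eq_dim image_graded_eq_span_derivs)
qed

lemma hilb_0_right:
  fixes G :: "'a::field_char_0 poly3"
  assumes "G \<noteq> 0" shows "hilb G 0 = 1"
proof -
  have "derivs 0 G = {G}" by (auto simp: derivs_def)
  then show ?thesis using hilb_eq_dim_derivs V.dim_singleton_nonzero assms by metis
qed

lemma hilb_0_left: "hilb (0 :: 'a::field_char_0 poly3) k = 0"
proof -
  have "derivs k (0 :: 'a poly3) \<subseteq> {0}" by (auto simp: derivs_def)
  then show ?thesis using hilb_eq_dim_derivs V.dim_subset_zero by metis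
qed

text \<open>Gorenstein duality: for \<open>g\<close> of degree \<open>e - i\<close> the forms \<open>g \<circ> H\<close>, \<open>H\<close> an \<open>i\<close>-th
  derivative of \<open>G\<close>, are constants, and they all vanish only if \<open>g \<circ> G = 0\<close>. This pairs
  \<open>S\<^bsub>e-i\<^esub>/Ann(G)\<close> with the span of the \<open>i\<close>-th derivatives.\<close>

lemma act_eq_0_if_act_derivs_eq_0:
  fixes g G :: "'a::field_char_0 poly3"
  assumes "homog e G" "homog (e - i) g" "i \<le> e" and "\<And>H. H \<in> derivs i G \<Longrightarrow> act g H = 0"
  shows "act g G = 0"
proof (rule homog_eq_0_if_pderiv3_eq_0)
  show "homog i (act g G)" using act_homog(1)[OF assms(1,2)] assms(3) by simp
  fix a b c assume "a + b + c = i"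
  then show "pderiv3 a b c (act g G) = 0"
    using assms(4)[of "pderiv3 a b c G"] by (auto simp: derivs_def act_pderiv3_commute)
qed

lemma hilb_le_hilb_complement:
  fixes G :: "'a::field_char_0 poly3"
  assumes G: "homog e G" and i: "i \<le> e"
  shows "hilb G (e - i) \<le> hilb G i"
proof -
  obtain B where B: "B \<subseteq> V.span (derivs i G)" "finite B" "V.span (derivs i G) \<subseteq> V.span B"
    "card B = hilb G i"
    using V.fin_dim_obtain_basis[OF V.fin_dim_span[OF finite_derivs]] hilb_eq_dim_derivs[of G i]
    by (metis V.dim_span)
  define S where "S = (graded (e - i) :: 'a poly3 set)"
  define \<phi> where "\<phi> H g = coeff3 (act g H) 0 0 0" for H g :: "'a poly3"
  have "V.dim S \<le> V.dim {g\<in>S. \<forall>H\<in>B. \<phi> H g = 0} + card B"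
    by (rule V.dim_le_dim_common_kernel_add_card)
      (auto simp: \<phi>_def act_add_left act_cscale_left S_def subspace_graded fin_dim_graded B)
  moreover have "{g\<in>S. \<forall>H\<in>B. \<phi> H g = 0} \<subseteq> S \<inter> Ann G"
  proof
    fix g assume g: "g \<in> {g\<in>S. \<forall>H\<in>B. \<phi> H g = 0}"
    then have hg: "homog (e - i) g" by (simp add: S_def graded_def)
    have "act g H = 0" if "H \<in> B" for H
    proof -
      have "homog (e - i) H" using that B(1) span_derivs_subset_graded[OF G] by (auto simp: graded_def)
      then show ?thesis using act_homog(1)[OF _ hg] g that homog_0_eq_0_iff by (fastforce simp: \<phi>_def)
    qed
    then have "V.span B \<subseteq> {H. act g H = 0}"
      by (intro V.span_minimal) (auto intro: VP.linear_subspace_kernel[OF linear_act_right])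
    then have "act g G = 0"
      using act_eq_0_if_act_derivs_eq_0[OF G hg i] B(3) V.span_superset by blast
    then show "g \<in> S \<inter> Ann G" using g by (simp add: Ann_def)
  qed
  then have "V.dim {g\<in>S. \<forall>H\<in>B. \<phi> H g = 0} \<le> V.dim (S \<inter> Ann G)"
    by (rule V.dim_subset_fin_dim[rotated]) (auto intro: V.fin_dim_subset[OF fin_dim_graded] simp: S_def)
  ultimately have "V.dim S \<le> V.dim (S \<inter> Ann G) + hilb G i" using B(4) by linarith
  then show ?thesis by (simp add: hilb_def kdim_eq_dim S_def)
qed

lemma hilb_symmetric:
  fixes G :: "'a::field_char_0 poly3"
  assumes "homog e G" "i \<le> e"
  shows "hilb G i = hilb G (e - i)"
  using hilb_le_hilb_complement[OF assms] hilb_le_hilb_complement[OF assms(1), of "e - i"] assms(2)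
  by simp

subsection \<open>A linear form and two complementary derivatives\<close>

lemma cscale_eq_0_iff [simp]: "cscale k p = 0 \<longleftrightarrow> k = 0 \<or> p = (0 :: 'a::idom poly3)"
  by (simp add: cscale_def)

lemma act_linear_form:
  fixes L e :: "'a::field_char_0 poly3"
  assumes L: "homog 1 L"
  shows "act L e = cscale (coeff3 L 1 0 0) (pderiv3 1 0 0 e) + cscale (coeff3 L 0 1 0) (pderiv3 0 1 0 e)
    + cscale (coeff3 L 0 0 1) (pderiv3 0 0 1 e)"
proof -
  have "a + b + c \<noteq> 1 \<Longrightarrow> coeff3 L a b c = 0" for a b c using L unfolding homog_def by blast
  then show ?thesis by (simp add: act_box[OF coeff3_bounded_homog[OF L]] atMost_Suc algebra_simps)
qed

text \<open>\<open>u\<close> and \<open>v\<close> are two of the partial derivatives which together with \<open>\<ell>\<close> span \<open>S\<^sub>1\<close>.\<close>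

locale complementary_derivations =
  fixes L :: "'a::field_char_0 poly3" and u v :: "'a poly3 \<Rightarrow> 'a poly3"
  assumes homog_L: "homog 1 L"
    and linear_u: "Vector_Spaces.linear cscale cscale u"
    and linear_v: "Vector_Spaces.linear cscale cscale v"
    and commute_uv: "\<And>x. u (v x) = v (u x)"
    and act_L_u: "\<And>x. act L (u x) = u (act L x)"
    and act_L_v: "\<And>x. act L (v x) = v (act L x)"
    and homog_u: "\<And>n x. homog n x \<Longrightarrow> homog (n - 1) (u x)"
    and homog_v: "\<And>n x. homog n x \<Longrightarrow> homog (n - 1) (v x)"
    and eq_0_if_killed:
      "\<And>n x. homog n x \<Longrightarrow> n \<ge> 1 \<Longrightarrow> act L x = 0 \<Longrightarrow> u x = 0 \<Longrightarrow> v x = 0 \<Longrightarrow> x = 0"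
    and u_derivs: "\<And>H k G. H \<in> derivs k G \<Longrightarrow> u H \<in> derivs (Suc k) G"
    and v_derivs: "\<And>H k G. H \<in> derivs k G \<Longrightarrow> v H \<in> derivs (Suc k) G"

lemma complementary_derivations_pderiv3I:
  fixes L :: "'a::field_char_0 poly3"
  assumes L: "homog 1 L" and u: "a + b + c = 1" and v: "a' + b' + c' = 1"
    and killed: "\<And>n x. homog n x \<Longrightarrow> n \<ge> 1 \<Longrightarrow> act L x = 0 \<Longrightarrow> pderiv3 a b c x = 0
      \<Longrightarrow> pderiv3 a' b' c' x = 0 \<Longrightarrow> x = 0"
  shows "complementary_derivations L (pderiv3 a b c) (pderiv3 a' b' c')"
proof -
  have derivs_closed: "pderiv3 a b c H \<in> derivs (Suc k) G"
    if H: "H \<in> derivs k G" and abc: "a + b + c = 1" for H G :: "'a poly3" and k a b c :: nat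
  proof -
    obtain a0 b0 c0 where "H = pderiv3 a0 b0 c0 G" "a0 + b0 + c0 = k"
      using H by (auto simp: derivs_def)
    then have "pderiv3 a b c H = pderiv3 (a + a0) (b + b0) (c + c0) G"
      and "(a + a0) + (b + b0) + (c + c0) = Suc k"
      using abc by (simp_all add: pderiv3_pderiv3)
    then show ?thesis unfolding derivs_def by blast
  qed
  show ?thesis
    by unfold_locales
      (use L u v killed homog_pderiv3(1)[of _ _ a b c] homog_pderiv3(1)[of _ _ a' b' c'] in
        \<open>simp_all add: linear_pderiv3 pderiv3_commute act_pderiv3_commute derivs_closed\<close>)
qed

lemma complementary_derivations_exist:
  fixes L :: "'a::field_char_0 poly3"
  assumes L: "homog 1 L" "L \<noteq> 0"
  obtains u v where "complementary_derivations L u v"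
proof -
  define \<alpha> \<beta> \<gamma> where "\<alpha> = coeff3 L 1 0 0" and "\<beta> = coeff3 L 0 1 0" and "\<gamma> = coeff3 L 0 0 1"
  have "\<alpha> \<noteq> 0 \<or> \<beta> \<noteq> 0 \<or> \<gamma> \<noteq> 0"
  proof (rule ccontr)
    assume "\<not> ?thesis"
    then have "coeff3 L a b c = 0" if "a + b + c = 1" for a b c
      using that by (auto simp: \<alpha>_def \<beta>_def \<gamma>_def add_is_1)
    then have "L = 0" using L(1) unfolding homog_def by (metis coeff3_0 poly3_eqI)
    with L(2) show False by simp
  qed
  moreover have killed: "x = 0" if "homog n x" "1 \<le> n" "act L x = 0"
    and "(\<alpha> \<noteq> 0 \<and> pderiv3 0 1 0 x = 0 \<and> pderiv3 0 0 1 x = 0)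
      \<or> (\<beta> \<noteq> 0 \<and> pderiv3 1 0 0 x = 0 \<and> pderiv3 0 0 1 x = 0)
      \<or> (\<gamma> \<noteq> 0 \<and> pderiv3 1 0 0 x = 0 \<and> pderiv3 0 1 0 x = 0)" for n x
    using that act_linear_form[OF L(1), of x] homog_eq_0_if_first_pderiv3_eq_0[of n x]
    by (auto simp: \<alpha>_def \<beta>_def \<gamma>_def)
  \<comment> \<open>take for \<open>u\<close>, \<open>v\<close> the two derivatives other than one whose coefficient in \<open>\<ell>\<close> is nonzero\<close>
  ultimately show ?thesis
    using complementary_derivations_pderiv3I[OF L(1)] that by (metis add_0 add_0_right)
qed

context complementary_derivations
begin

lemma u_0 [simp]: "u 0 = 0"
  using VP.linear_0[OF linear_u] .

lemma v_0 [simp]: "v 0 = 0"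
  using VP.linear_0[OF linear_v] .

definition kerL :: "nat \<Rightarrow> 'a poly3 set" where
  "kerL n = graded n \<inter> {x. act L x = 0}"

lemma subspace_kerL: "V.subspace (kerL n)"
  unfolding kerL_def by (intro V.subspace_inter subspace_graded VP.linear_subspace_kernel[OF linear_act_right])

lemma fin_dim_kerL: "V.fin_dim (kerL n)"
  by (rule V.fin_dim_subset[OF fin_dim_graded]) (auto simp: kerL_def)

lemma u_kerL: "x \<in> kerL (Suc n) \<Longrightarrow> u x \<in> kerL n"
  using homog_u[of "Suc n" x] act_L_u[of x] by (auto simp: kerL_def graded_def)

lemma v_kerL: "x \<in> kerL (Suc n) \<Longrightarrow> v x \<in> kerL n"
  using homog_v[of "Suc n" x] act_L_v[of x] by (auto simp: kerL_def graded_def)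

text \<open>On forms killed by \<open>\<ell>\<close>, \<open>u\<close> is injective on the kernel of \<open>v\<close> and maps it into
  the kernel of \<open>v\<close> one degree lower.\<close>

lemma dim_kerL_kernel_v_le_1: "V.dim {x\<in>kerL n. v x = 0} \<le> 1"
proof (induction n)
  case 0
  have "V.dim {x\<in>kerL 0. v x = 0} \<le> V.dim (graded 0 :: 'a poly3 set)"
    by (rule V.dim_subset_fin_dim[OF fin_dim_graded]) (auto simp: kerL_def)
  then show ?case using dim_graded_0[where 'a='a] by simp
next
  case (Suc n)
  define E where "E = {x\<in>kerL (Suc n). v x = 0}"
  have "V.subspace E" unfolding E_def by (rule VP.subspace_kernel_on[OF linear_v subspace_kerL])
  moreover have "V.fin_dim E" by (rule V.fin_dim_subset[OF fin_dim_kerL]) (auto simp: E_def)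
  ultimately have "V.dim E = V.dim {x\<in>E. u x = 0} + V.dim (u ` E)"
    by (rule VP.rank_nullity[OF linear_u])
  moreover have "{x\<in>E. u x = 0} \<subseteq> {0}"
    using eq_0_if_killed by (auto simp: E_def kerL_def graded_def)
  then have "V.dim {x\<in>E. u x = 0} = 0" by (rule V.dim_subset_zero)
  moreover have "u ` E \<subseteq> {x\<in>kerL n. v x = 0}"
    using u_kerL by (auto simp: E_def simp flip: commute_uv)
  then have "V.dim (u ` E) \<le> V.dim {x\<in>kerL n. v x = 0}"
    by (rule V.dim_subset_fin_dim[rotated]) (rule V.fin_dim_subset[OF fin_dim_kerL], auto)
  ultimately show ?case using Suc.IH unfolding E_def by linarith
qed

lemma dim_kerL_le: "V.dim (kerL n) \<le> n + 1"
proof (induction n)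
  case 0
  have "V.dim (kerL 0) \<le> V.dim (graded 0 :: 'a poly3 set)"
    by (rule V.dim_subset_fin_dim[OF fin_dim_graded]) (auto simp: kerL_def)
  then show ?case using dim_graded_0[where 'a='a] by simp
next
  case (Suc n)
  have "V.dim (kerL (Suc n)) = V.dim {x\<in>kerL (Suc n). v x = 0} + V.dim (v ` kerL (Suc n))"
    by (rule VP.rank_nullity[OF linear_v subspace_kerL fin_dim_kerL])
  moreover have "V.dim (v ` kerL (Suc n)) \<le> V.dim (kerL n)"
    using v_kerL by (intro V.dim_subset_fin_dim[OF fin_dim_kerL]) auto
  ultimately show ?case using dim_kerL_kernel_v_le_1[of "Suc n"] Suc.IH by linarith
qed

lemma span_image_uv_kerL:
  "W \<subseteq> kerL (Suc n) \<Longrightarrow> V.span (u ` W \<union> v ` W) \<subseteq> kerL n"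
  using u_kerL v_kerL by (intro V.span_minimal subspace_kerL) blast

lemma image_v_span_image_uv: "v ` V.span (u ` W \<union> v ` W) = V.span (u ` v ` W \<union> v ` v ` W)"
proof -
  have "v ` (u ` W \<union> v ` W) = u ` v ` W \<union> v ` v ` W"
    by (auto simp: image_image commute_uv)
  then show ?thesis using VP.linear_span_image[OF linear_v] by metis
qed

lemma dim_kernel_v_span_image_uv_pos:
  assumes W: "W \<subseteq> kerL (Suc n)" and x0: "x0 \<in> W" "v x0 = 0" "x0 \<noteq> 0"
  shows "1 \<le> V.dim {x\<in>V.span (u ` W \<union> v ` W). v x = 0}"
proof -
  define N where "N = {x\<in>V.span (u ` W \<union> v ` W). v x = 0}"
  have "homog (Suc n) x0" "act L x0 = 0" using W x0(1) by (auto simp: kerL_def graded_def)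
  then have "u x0 \<noteq> 0" using eq_0_if_killed[of "Suc n" x0] x0(2,3) by auto
  moreover have "u x0 \<in> N"
    using x0 commute_uv[of x0] V.span_base[of "u x0" "u ` W \<union> v ` W"] by (simp add: N_def)
  moreover have "V.fin_dim N"
    using span_image_uv_kerL[OF W] by (intro V.fin_dim_subset[OF fin_dim_kerL]) (auto simp: N_def)
  ultimately have "V.dim {u x0} \<le> V.dim N" "V.dim {u x0} = 1"
    using V.dim_subset_fin_dim[of N "{u x0}"] V.dim_singleton_nonzero[of "u x0"] by simp_all
  then show ?thesis unfolding N_def by simp
qed

text \<open>Forms killed by \<open>\<ell>\<close> behave like binary forms, dual to \<open>S/(\<ell>) \<cong> k[u, v]\<close>; this is
  Macaulay's bound for them.\<close>

lemma dim_span_image_uv_ge: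
  assumes "V.subspace W" "W \<subseteq> kerL n"
  shows "min (V.dim W) n \<le> V.dim (V.span (u ` W \<union> v ` W))"
  using assms
proof (induction n arbitrary: W)
  case (Suc n)
  define T where "T = V.span (u ` W \<union> v ` W)"
  have fin_T: "V.fin_dim T"
    unfolding T_def using V.fin_dim_subset[OF fin_dim_kerL span_image_uv_kerL[OF Suc.prems(2)]] .
  have rank_W: "V.dim W = V.dim {x\<in>W. v x = 0} + V.dim (v ` W)"
    by (rule VP.rank_nullity[OF linear_v Suc.prems(1) V.fin_dim_subset[OF fin_dim_kerL Suc.prems(2)]])
  have "V.dim {x\<in>W. v x = 0} \<le> V.dim {x\<in>kerL (Suc n). v x = 0}"
    using Suc.prems(2) by (intro V.dim_subset_fin_dim[OF V.fin_dim_subset[OF fin_dim_kerL]]) auto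
  then consider "V.dim {x\<in>W. v x = 0} = 0" | "V.dim {x\<in>W. v x = 0} = 1"
    using dim_kerL_kernel_v_le_1[of "Suc n"] by linarith
  then show ?case
  proof cases
    case 1
    have "v ` W \<subseteq> T" unfolding T_def using V.span_superset[of "u ` W \<union> v ` W"] by blast
    then have "V.dim (v ` W) \<le> V.dim T" by (rule V.dim_subset_fin_dim[OF fin_T])
    then show ?thesis using rank_W 1 unfolding T_def by linarith
  next
    case 2
    have "\<not> {x\<in>W. v x = 0} \<subseteq> {0}"
    proof
      assume "{x\<in>W. v x = 0} \<subseteq> {0}"
      then have "V.dim {x\<in>W. v x = 0} = 0" by (rule V.dim_subset_zero)
      with 2 show False by simp
    qed
    then obtain x0 where x0: "x0 \<in> W" "v x0 = 0" "x0 \<noteq> 0" by blast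
    have "V.dim T = V.dim {x\<in>T. v x = 0} + V.dim (v ` T)"
      by (rule VP.rank_nullity[OF linear_v _ fin_T]) (simp add: T_def)
    moreover have "1 \<le> V.dim {x\<in>T. v x = 0}"
      unfolding T_def by (rule dim_kernel_v_span_image_uv_pos[OF Suc.prems(2) x0])
    moreover have "v ` W \<subseteq> kerL n" using Suc.prems(2) v_kerL by blast
    then have "min (V.dim (v ` W)) n \<le> V.dim (v ` T)"
      unfolding T_def image_v_span_image_uv
      by (intro Suc.IH VP.linear_subspace_image[OF linear_v Suc.prems(1)])
    ultimately show ?thesis using rank_W 2 unfolding T_def by (simp add: min_def split: if_splits)
  qed
qed simp

text \<open>\<open>kernel_dim G e i\<close> is the Hilbert function in degree \<open>i\<close> of \<open>(0 : \<ell>)\<close> in \<open>S/Ann G\<close>,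
  computed dually as the kernel of \<open>\<ell>\<close> on the \<open>(e - i)\<close>-th derivatives of \<open>G\<close>.\<close>

definition kernel_dim :: "'a poly3 \<Rightarrow> nat \<Rightarrow> nat \<Rightarrow> nat" where
  "kernel_dim G e i = V.dim {x\<in>V.span (derivs (e - i) G). act L x = 0}"

lemma hilb_eq_kernel_dim_add_hilb:
  assumes G: "homog e G" and i: "1 \<le> i" "i \<le> e"
  shows "hilb G i = kernel_dim G e i + hilb (act L G) (i - 1)"
proof -
  define S where "S = V.span (derivs (e - i) G)"
  have "V.dim S = V.dim {x\<in>S. act L x = 0} + V.dim (act L ` S)"
    unfolding S_def by (intro VP.rank_nullity[OF linear_act_right] V.fin_dim_span finite_derivs) simp
  moreover have "V.dim S = hilb G (e - i)" by (simp add: S_def hilb_eq_dim_derivs)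
  moreover have "hilb G i = hilb G (e - i)" by (rule hilb_symmetric[OF G i(2)])
  moreover have "act L ` S = V.span (derivs (e - i) (act L G))"
    unfolding S_def using VP.linear_span_image[OF linear_act_right] act_image_derivs by metis
  then have "V.dim (act L ` S) = hilb (act L G) (e - i)"
    by (simp add: hilb_eq_dim_derivs)
  moreover have "(e - 1) - (i - 1) = e - i" using i by simp
  then have "hilb (act L G) (i - 1) = hilb (act L G) (e - i)"
    using hilb_symmetric[OF act_homog(1)[OF G homog_L], of "i - 1"] i by simp
  ultimately show ?thesis unfolding kernel_dim_def S_def by linarith
qed

lemma kernel_dim_0:
  assumes G: "homog e G"
  shows "kernel_dim G e 0 = hilb G 0"
proof -
  have "act L x = 0" if "x \<in> V.span (derivs e G)" for x
    using span_derivs_subset_graded[OF G, of e] that act_homog(2)[OF _ homog_L, of 0 x]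
    by (auto simp: graded_def)
  then have "{x\<in>V.span (derivs e G). act L x = 0} = V.span (derivs e G)" by blast
  then have "kernel_dim G e 0 = hilb G e"
    unfolding kernel_dim_def by (simp add: hilb_eq_dim_derivs)
  also have "\<dots> = hilb G 0" using hilb_symmetric[OF G, of 0] by (simp only: diff_zero)
  finally show ?thesis .
qed

lemma hilb_eq_kernel_dim:
  assumes "homog e G" "act L G = 0" "i \<le> e"
  shows "hilb G i = kernel_dim G e i"
  using kernel_dim_0[OF assms(1)] hilb_eq_kernel_dim_add_hilb[OF assms(1), of i] assms(2,3) hilb_0_left
  by (cases "i = 0") simp_all

lemma kernel_dim_le:
  assumes G: "homog e G" and i: "i \<le> e"
  shows "kernel_dim G e i \<le> i + 1"
proof -
  have "{x\<in>V.span (derivs (e - i) G). act L x = 0} \<subseteq> kerL i"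
    using span_derivs_subset_graded[OF G, of "e - i"] i by (auto simp: kerL_def)
  then show ?thesis
    unfolding kernel_dim_def using V.dim_subset_fin_dim[OF fin_dim_kerL] dim_kerL_le le_trans by blast
qed

lemma kernel_dim_growth:
  assumes G: "homog e G" and i: "i + 1 \<le> e"
  shows "min (kernel_dim G e (Suc i)) (i + 1) \<le> kernel_dim G e i"
proof -
  define W where "W = {x\<in>V.span (derivs (e - Suc i) G). act L x = 0}"
  define W' where "W' = {x\<in>V.span (derivs (e - i) G). act L x = 0}"
  have subspace_W': "V.subspace W'"
    unfolding W'_def by (rule VP.subspace_kernel_on[OF linear_act_right]) simp
  have "W \<subseteq> kerL (Suc i)"
    using span_derivs_subset_graded[OF G, of "e - Suc i"] i by (auto simp: W_def kerL_def)
  then have "min (V.dim W) (Suc i) \<le> V.dim (V.span (u ` W \<union> v ` W))"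
    by (intro dim_span_image_uv_ge) (simp add: W_def VP.subspace_kernel_on[OF linear_act_right])
  moreover have "w ` V.span (derivs (e - Suc i) G) \<subseteq> V.span (derivs (e - i) G)"
    if "Vector_Spaces.linear cscale cscale w" "\<And>H k G. H \<in> derivs k G \<Longrightarrow> w H \<in> derivs (Suc k) G"
    for w
  proof -
    have "w ` V.span (derivs (e - Suc i) G) = V.span (w ` derivs (e - Suc i) G)"
      using VP.linear_span_image[OF that(1)] by simp
    also have "\<dots> \<subseteq> V.span (derivs (e - i) G)"
      using that(2)[of _ "e - Suc i" G] i by (intro V.span_mono) (auto simp: Suc_diff_Suc)
    finally show ?thesis .
  qed
  then have "u ` W \<union> v ` W \<subseteq> W'"
    using linear_u linear_v u_derivs v_derivs
    using act_L_u act_L_v by (auto simp: W_def W'_def)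
  then have "V.dim (V.span (u ` W \<union> v ` W)) \<le> V.dim W'"
    by (intro V.dim_subset_fin_dim[OF V.fin_dim_subset[OF V.fin_dim_span[OF finite_derivs]]]
        V.span_minimal[OF _ subspace_W'])
      (auto simp: W'_def)
  ultimately show ?thesis unfolding kernel_dim_def W_def W'_def by simp
qed

end

subsection \<open>Sequences with two-variable Macaulay growth\<close>

definition macaulay_growth :: "nat \<Rightarrow> (nat \<Rightarrow> nat) \<Rightarrow> bool" where
  "macaulay_growth e b \<longleftrightarrow> (\<forall>i\<le>e. b i \<le> i + 1) \<and> (\<forall>i. i + 1 \<le> e \<longrightarrow> min (b (Suc i)) (i + 1) \<le> b i)"

lemma macaulay_growth_le: "macaulay_growth e b \<Longrightarrow> i \<le> e \<Longrightarrow> b i \<le> i + 1"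
  unfolding macaulay_growth_def by blast

lemma macaulay_growth_antimono:
  assumes "macaulay_growth e b" "b i \<le> i" "i \<le> k" "k \<le> e"
  shows "b k \<le> b i"
  using assms(3,4)
proof (induction k rule: dec_induct)
  case (step k)
  then have "min (b (Suc k)) (k + 1) \<le> b k" using assms(1) unfolding macaulay_growth_def by auto
  then show ?case using step assms(2) by (auto simp: min_def split: if_splits)
qed simp

lemma macaulay_growth_initial:
  assumes "macaulay_growth e b" "k \<le> e" "k \<le> b k" "i < k"
  shows "b i = i + 1"
proof -
  have "\<not> b i \<le> i"
  proof
    assume "b i \<le> i"
    then have "b k \<le> b i" using macaulay_growth_antimono[OF assms(1)] assms by simp
    then show False using assms \<open>b i \<le> i\<close> by simp
  qed
  then show ?thesis using macaulay_growth_le[OF assms(1), of i] assms by simp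
qed

text \<open>Past its first drop below \<open>i + 1\<close> such a sequence is non-increasing, so a symmetry
  \<open>b (e - k) = b k\<close> can only hold if it is constant there.\<close>

lemma macaulay_growth_symmetric_shape:
  assumes mac: "macaulay_growth e b" and n: "2 * n \<le> e" "b n \<le> n" and M: "M \<le> n"
    and sym: "\<And>k. M \<le> k \<Longrightarrow> k \<le> n \<Longrightarrow> b (e - k) = b k"
  shows "\<exists>j\<le>n. b j \<le> j \<and> (\<forall>i<j. b i = i + 1) \<and> (\<forall>i. j \<le> i \<and> M \<le> i \<and> i \<le> n \<longrightarrow> b i = b n)
    \<and> b n \<le> j \<and> (M < j \<longrightarrow> b n = j)"
proof -
  define j where "j = (LEAST j. b j \<le> j)"
  have bj: "b j \<le> j" unfolding j_def by (rule LeastI[of _ n]) (rule n(2))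
  have jn: "j \<le> n" unfolding j_def by (rule Least_le) (rule n(2))
  have below: "b i = i + 1" if "i < j" for i
    using not_less_Least[of i "\<lambda>j. b j \<le> j"] macaulay_growth_le[OF mac, of i] that jn n(1)
    unfolding j_def by simp
  have plateau: "b i = b n" if "j \<le> i" "M \<le> i" "i \<le> n" for i
  proof -
    have "b i \<le> i" using macaulay_growth_antimono[OF mac bj, of i] bj that n(1) by simp
    then have "b n \<le> b i" using macaulay_growth_antimono[OF mac, of i n] that n(1) by simp
    moreover have "n \<le> e - i" using that n(1) by auto
    then have "b (e - i) \<le> b n" using macaulay_growth_antimono[OF mac n(2), of "e - i"] that n(1) by simp
    ultimately show ?thesis using sym[of i] that by simp
  qed
  have "b n \<le> j"
    using plateau[of "max j M"] macaulay_growth_antimono[OF mac bj, of "max j M"] bj jn M n(1) by simp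
  moreover have "b n = j" if "M < j"
  proof -
    have "b (e - (j - 1)) = j" using sym[of "j - 1"] below[of "j - 1"] that jn by simp
    moreover have "b (e - (j - 1)) \<le> b j"
      using macaulay_growth_antimono[OF mac bj, of "e - (j - 1)"] jn n(1) by simp
    ultimately show ?thesis using bj plateau[of j] that jn by simp
  qed
  moreover have "\<forall>i<j. b i = i + 1" "\<forall>i. j \<le> i \<and> M \<le> i \<and> i \<le> n \<longrightarrow> b i = b n"
    using below plateau by blast+
  ultimately show ?thesis using bj jn by blast
qed

lemma macaulay_growth_symmetric_min:
  assumes mac: "macaulay_growth e b" and n: "2 * n \<le> e" "b n \<le> n" and M: "M \<le> n" "M \<le> b n"
    and sym: "\<And>k. M \<le> k \<Longrightarrow> k \<le> n \<Longrightarrow> b (e - k) = b k"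
    and i: "i \<le> n"
  shows "b i = min (i + 1) (b n)"
proof -
  have "\<exists>j\<le>n. b j \<le> j \<and> (\<forall>i<j. b i = i + 1) \<and> (\<forall>i. j \<le> i \<and> M \<le> i \<and> i \<le> n \<longrightarrow> b i = b n)
    \<and> b n \<le> j \<and> (M < j \<longrightarrow> b n = j)"
    by (rule macaulay_growth_symmetric_shape[OF mac n M(1)]) (rule sym)
  then obtain j where j: "\<forall>i<j. b i = i + 1" "\<forall>i. j \<le> i \<and> M \<le> i \<and> i \<le> n \<longrightarrow> b i = b n"
    "b n \<le> j" "M < j \<longrightarrow> b n = j"
    by blast
  have j_cases: "M < j \<and> b n = j \<or> j = M \<and> b n = M" using j(3,4) M(2) by (cases "M < j") auto
  show ?thesis
  proof (cases "i < j")
    case True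
    then show ?thesis using j(1) j_cases by auto
  next
    case False
    then have "j \<le> i" "M \<le> i" using j_cases by auto
    then have "b i = b n" using j(2) i by blast
    then show ?thesis using False j_cases by auto
  qed
qed

lemma macaulay_growth_cong:
  "(\<And>i. i \<le> e \<Longrightarrow> b i = b' i) \<Longrightarrow> macaulay_growth e b \<longleftrightarrow> macaulay_growth e b'"
  unfolding macaulay_growth_def by (metis Suc_eq_plus1 Suc_leD)

subsection \<open>Hilbert functions along \<open>F\<close>, \<open>\<ell> \<circ> F\<close>, \<open>\<ell>\<^sup>2 \<circ> F\<close>\<close>

text \<open>\<open>h2\<close>, \<open>h1\<close>, \<open>h\<close> play the Hilbert functions of \<open>A\<^sup>(\<^sup>2\<^sup>)\<close>, \<open>A\<^sup>(\<^sup>1\<^sup>)\<close>, \<open>A\<close>, symmetric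
  about their socle degrees \<open>2m - 1\<close>, \<open>2m\<close>, \<open>2m + 1\<close>; \<open>b1\<close> and \<open>b\<close> play the Hilbert
  functions of \<open>(0 : \<ell>)\<close> in \<open>A\<^sup>(\<^sup>1\<^sup>)\<close> and \<open>A\<close>. Since \<open>\<ell>\<^sup>3 \<circ> F = 0\<close>, \<open>\<ell>\<close> annihilates
  \<open>A\<^sup>(\<^sup>2\<^sup>)\<close>, so \<open>h2\<close> itself has Macaulay growth.\<close>

locale hilbert_tower =
  fixes m :: nat and h2 h1 h b1 b :: "nat \<Rightarrow> nat"
  assumes m_pos: "1 \<le> m"
    and growth_h2: "macaulay_growth (2 * m - 1) h2" and h2_0: "h2 0 = 1"
    and symmetric_h2: "\<And>i. i \<le> 2 * m - 1 \<Longrightarrow> h2 i = h2 (2 * m - 1 - i)"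
    and growth_b1: "macaulay_growth (2 * m) b1" and h1_0: "h1 0 = 1"
    and h1_split: "\<And>i. 1 \<le> i \<Longrightarrow> i \<le> 2 * m \<Longrightarrow> h1 i = b1 i + h2 (i - 1)"
    and symmetric_h1: "\<And>i. i \<le> 2 * m \<Longrightarrow> h1 i = h1 (2 * m - i)"
    and growth_b: "macaulay_growth (2 * m + 1) b" and h_0: "h 0 = 1"
    and h_split: "\<And>i. 1 \<le> i \<Longrightarrow> i \<le> 2 * m + 1 \<Longrightarrow> h i = b i + h1 (i - 1)"
    and symmetric_h: "\<And>i. i \<le> 2 * m + 1 \<Longrightarrow> h i = h (2 * m + 1 - i)"
begin

lemma h2_eq_min:
  assumes "i \<le> m" shows "h2 i = min (i + 1) (h2 m)"
proof -
  have mid: "h2 m = h2 (m - 1)" using symmetric_h2[of m] m_pos by simp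
  show ?thesis
  proof (cases "h2 (m - 1) \<le> m - 1")
    case True
    show ?thesis
    proof (cases "i = m")
      case False
      then have "h2 i = min (i + 1) (h2 (m - 1))"
      proof (intro macaulay_growth_symmetric_min[where M = 0, OF growth_h2 _ True])
        show "h2 (2 * m - 1 - k) = h2 k" if "k \<le> m - 1" for k
          using symmetric_h2[of k] that by simp
      qed (use assms in simp_all)
      then show ?thesis using mid by simp
    qed (use mid True in simp)
  next
    case False
    then have "m \<le> h2 m" using mid by simp
    then have below: "h2 k = k + 1" if "k < m" for k
      using macaulay_growth_initial[OF growth_h2 _ _ that] m_pos by simp
    have "h2 m = m" using mid below[of "m - 1"] m_pos by simp
    then show ?thesis using below[of i] assms by (cases "i = m") simp_all
  qed
qed

context
  assumes r_pos: "1 \<le> h2 m" and b1_mid: "h2 m \<le> b1 m" "b1 m \<le> m"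
begin

lemma b1_eq_min:
  assumes "i \<le> m" shows "b1 i = min (i + 1) (b1 m)"
proof (rule macaulay_growth_symmetric_min[OF growth_b1 _ b1_mid(2) _ b1_mid(1) _ assms])
  fix k assume k: "h2 m \<le> k" "k \<le> m"
  have "h2 (k - 1) = h2 m" "h2 (2 * m - k - 1) = h2 m"
    using h2_eq_min[of "k - 1"] h2_eq_min[of k] symmetric_h2[of k] k r_pos by (auto simp: min_def)
  then show "b1 (2 * m - k) = b1 k"
    using symmetric_h1[of k] h1_split[of k] h1_split[of "2 * m - k"] k r_pos by simp
qed (use b1_mid in simp_all)

lemma h1_eq_min:
  assumes "i \<le> m" shows "h1 i = min i (h2 m) + min (i + 1) (b1 m)"
proof (cases "i = 0")
  case True
  then show ?thesis using h1_0 r_pos b1_mid by simp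
next
  case False
  then show ?thesis using h1_split[of i] b1_eq_min[OF assms] h2_eq_min[of "i - 1"] assms by simp
qed

lemma b_symmetric:
  assumes k: "max (b1 m) (h2 m + 1) \<le> k" "k \<le> m"
  shows "b (2 * m + 1 - k) = b k"
proof -
  have "h1 k = h2 m + b1 m" "h1 (k - 1) = h2 m + b1 m"
    using h1_eq_min[of k] h1_eq_min[of "k - 1"] k by (auto simp: min_def)
  moreover have "h k = b k + h1 (k - 1)" using h_split[of k] k by simp
  moreover have "h (2 * m + 1 - k) = b (2 * m + 1 - k) + h1 (2 * m - k)"
    using h_split[of "2 * m + 1 - k"] k by simp
  moreover have "h1 (2 * m - k) = h1 k" using symmetric_h1[of k] k by simp
  moreover have "h k = h (2 * m + 1 - k)" using symmetric_h[of k] k by simp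
  ultimately show ?thesis by linarith
qed

lemma b_cases_at_bottom:
  assumes r_m: "h2 m + 1 \<le> m" and bottom: "b1 m = h2 m" "b m = h2 m"
  shows "(\<forall>i\<le>m. b i = min (i + 1) (b m))
    \<or> ((\<forall>i\<le>h2 m. b i = i + 1) \<and> (\<forall>i. h2 m < i \<and> i \<le> m \<longrightarrow> b i = h2 m))"
proof -
  define r where "r = h2 m"
  have "\<exists>j\<le>m. b j \<le> j \<and> (\<forall>i<j. b i = i + 1) \<and> (\<forall>i. j \<le> i \<and> r + 1 \<le> i \<and> i \<le> m \<longrightarrow> b i = b m)
    \<and> b m \<le> j \<and> (r + 1 < j \<longrightarrow> b m = j)"
    by (rule macaulay_growth_symmetric_shape[OF growth_b])
      (use r_m bottom b_symmetric in \<open>simp_all add: r_def\<close>)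
  then obtain j where j: "b j \<le> j" "\<forall>i<j. b i = i + 1"
    "\<forall>i. j \<le> i \<and> r + 1 \<le> i \<and> i \<le> m \<longrightarrow> b i = b m" "b m \<le> j" "r + 1 < j \<longrightarrow> b m = j"
    by blast
  have "j \<le> r + 1" using j(5) bottom by (auto simp: r_def)
  then have plateau: "b i = r" if "r < i" "i \<le> m" for i
    using j(3)[rule_format, of i] that bottom by (auto simp: r_def)
  consider "j = r + 1" | "j = r" using j(4) \<open>j \<le> r + 1\<close> bottom by (force simp: r_def)
  then show ?thesis
  proof cases
    case 1
    then show ?thesis using j(2) plateau by (simp add: r_def)
  next
    case 2
    have "b r = r"
    proof (cases "r = m")
      case False
      then have "b (r + 1) \<le> b r"
        using macaulay_growth_antimono[OF growth_b, of r "r + 1"] j(1) 2 r_m by (simp add: r_def)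
      then show ?thesis using j(1) plateau[of "r + 1"] 2 r_m False by (simp add: r_def)
    qed (use bottom in \<open>simp add: r_def\<close>)
    then have "b i = min (i + 1) (b m)" if "i \<le> m" for i
      using j(2) plateau[of i] that 2 bottom
      by (cases "i < r"; cases "i = r") (auto simp: min_def r_def)
    then show ?thesis by blast
  qed
qed

lemma b_cases:
  assumes r_m: "h2 m + 1 \<le> m" and b_mid: "b1 m \<le> b m" "b m \<le> m + 1"
  shows "(\<forall>i\<le>m. b i = min (i + 1) (b m))
    \<or> (b1 m = h2 m \<and> b m = h2 m \<and> (\<forall>i\<le>h2 m. b i = i + 1) \<and> (\<forall>i. h2 m < i \<and> i \<le> m \<longrightarrow> b i = h2 m))"
proof -
  define M where "M = max (b1 m) (h2 m + 1)"
  consider "b m = m + 1" | "M \<le> b m" "b m \<le> m" | "b m < M"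
    using b_mid by linarith
  then show ?thesis
  proof cases
    case 1
    then have "b i = min (i + 1) (b m)" if "i \<le> m" for i
      using macaulay_growth_initial[OF growth_b, of m i] that by (cases "i = m") auto
    then show ?thesis by blast
  next
    case 2
    have "b i = min (i + 1) (b m)" if "i \<le> m" for i
      by (rule macaulay_growth_symmetric_min[where M = M, OF growth_b _ 2(2) _ 2(1) _ that])
        (use r_m b1_mid b_symmetric[simplified] in \<open>simp_all add: M_def\<close>)
    then show ?thesis by blast
  next
    case 3
    then have "b1 m = h2 m" "b m = h2 m" using b_mid b1_mid by (auto simp: M_def)
    then show ?thesis using b_cases_at_bottom[OF r_m] by blast
  qed
qed

end


lemma shape_s_maximal:
  assumes r: "r = h2 m" and s: "s = h1 m" and t: "t = h m"
    and r_pos: "1 \<le> r" and r_m: "r + 1 \<le> m" and s_eq: "s = m + r + 1" and t_eq: "t = 2 * m + 1 + r"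
  shows "(\<forall>i. i \<le> r \<longrightarrow> h1 i = 2 * i + 1) \<and>
      (\<forall>i. r + 1 \<le> i \<and> i \<le> m \<longrightarrow> h1 i = i + 1 + r) \<and>
      h 0 = 1 \<and>
      (\<forall>i. 1 \<le> i \<and> i \<le> r + 1 \<longrightarrow> h i = 3 * i) \<and>
      (\<forall>i. r + 2 \<le> i \<and> i \<le> m \<longrightarrow> h i = 2 * i + 1 + r)"
proof -
  have h2_below: "h2 (i - 1) = min i r" if "1 \<le> i" "i \<le> m" for i
    using h2_eq_min[of "i - 1"] that r by simp
  have "b1 m = m + 1" using h1_split[of m] h2_below[of m] m_pos r_m r s s_eq by simp
  then have b1: "b1 i = i + 1" if "i \<le> m" for i
    using macaulay_growth_initial[OF growth_b1, of m i] that by (cases "i = m") simp_all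
  have h1: "h1 i = i + 1 + min i r" if "i \<le> m" for i
    using h1_split[of i] b1[of i] h2_below[of i] h1_0 that by (cases "i = 0") simp_all
  have "min (m - 1) r = r" using r_m by simp
  then have "b m = m + 1" using h_split[of m] h1[of "m - 1"] m_pos r_m t t_eq by simp
  then have b: "b i = i + 1" if "i \<le> m" for i
    using macaulay_growth_initial[OF growth_b, of m i] that by (cases "i = m") simp_all
  have h: "h i = i + 1 + (i + min (i - 1) r)" if "1 \<le> i" "i \<le> m" for i
    using h_split[of i] b[of i] h1[of "i - 1"] that by simp
  show ?thesis using h1 h h_0 r_m by (auto simp: min_def)
qed

lemma shape_r_maximal:
  assumes r: "r = h2 m" and s: "s = h1 m" and t: "t = h m"
    and r_eq: "r = m" and s_lower: "2 * m \<le> s" and t_lower: "m + s - 1 \<le> t"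
  shows "\<forall>i. i < m \<longrightarrow> h2 i = i + 1 \<and> h1 i = 2 * i + 1 \<and> h 0 = 1 \<and> (1 \<le> i \<longrightarrow> h i = 3 * i)"
proof -
  have h2: "h2 i = i + 1" if "i < m" for i using h2_eq_min[of i] that r r_eq by simp
  have "m \<le> b1 m" using h1_split[of m] h2[of "m - 1"] m_pos s s_lower by simp
  then have b1: "b1 i = i + 1" if "i < m" for i using macaulay_growth_initial[OF growth_b1 _ _ that] by simp
  have h1: "h1 i = 2 * i + 1" if "i < m" for i
    using h1_split[of i] b1[of i] h2[of "i - 1"] h1_0 that by (cases "i = 0") simp_all
  have "m \<le> b m" using h_split[of m] h1[of "m - 1"] m_pos s s_lower t t_lower by simp
  then have b: "b i = i + 1" if "i < m" for i using macaulay_growth_initial[OF growth_b _ _ that] by simp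
  have "h i = 3 * i" if "1 \<le> i" "i < m" for i using h_split[of i] b[of i] h1[of "i - 1"] that by simp
  then show ?thesis using h2 h1 h_0 by simp
qed

context
  fixes r s t :: nat
  assumes r: "r = h2 m" and s: "s = h1 m" and t: "t = h m"
    and r_pos: "1 \<le> r" and r_m: "r + 1 \<le> m" and s_lower: "2 * r \<le> s" and s_upper: "s \<le> m + r"
    and t_lower: "2 * s \<le> t + r" and t_upper: "t \<le> m + s + 1"
begin

lemma b1_mid_eq: "b1 m = s - r"
proof -
  have "min m r = r" using r_m by simp
  then show ?thesis using h1_split[of m] h2_eq_min[of "m - 1"] m_pos r_m r s by simp
qed

lemma h1_eq_case1: "i \<le> m \<Longrightarrow> h1 i = min i r + min (i + 1) (s - r)"
  using h1_eq_min r r_pos b1_mid_eq s_lower s_upper by simp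

lemma b_mid_eq: "b m = t - s"
proof -
  have "min (m - 1) r = r" "min m (s - r) = s - r" using r_m s_upper by simp_all
  then have "h1 (m - 1) = s" using h1_eq_case1[of "m - 1"] s_lower by simp
  then show ?thesis using h_split[of m] m_pos t by simp
qed

lemma h_eq_case1: "1 \<le> i \<Longrightarrow> i \<le> m \<Longrightarrow> h i = b i + min (i - 1) r + min i (s - r)"
  using h_split[of i] h1_eq_case1[of "i - 1"] by simp

lemma b_cases_case1:
  "(\<forall>i\<le>m. b i = min (i + 1) (t - s))
    \<or> (t = 3 * r \<and> (\<forall>i\<le>r. b i = i + 1) \<and> (\<forall>i. r < i \<and> i \<le> m \<longrightarrow> b i = r))"
proof -
  have "1 \<le> h2 m" "h2 m \<le> b1 m" "b1 m \<le> m" "h2 m + 1 \<le> m" "b1 m \<le> b m" "b m \<le> m + 1"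
    using r r_pos r_m b1_mid_eq b_mid_eq s_lower s_upper t_lower t_upper by simp_all
  from b_cases[OF this] show ?thesis
  proof
    assume "b1 m = h2 m \<and> b m = h2 m \<and> (\<forall>i\<le>h2 m. b i = i + 1) \<and> (\<forall>i. h2 m < i \<and> i \<le> m \<longrightarrow> b i = h2 m)"
    moreover from this have "t = 3 * r"
      using r b1_mid_eq b_mid_eq s_lower t_lower by arith
    ultimately show ?thesis using r by blast
  qed (simp add: b_mid_eq)
qed

lemma shape_h2_h1:
  "(\<forall>i. i < r \<longrightarrow> h2 i = i + 1) \<and>
   (\<forall>i. r \<le> i \<and> i \<le> m \<longrightarrow> h2 i = r) \<and>
   (\<forall>i. i < r \<longrightarrow> h1 i = 2 * i + 1) \<and>
   (\<forall>i. r \<le> i \<and> i + r + 1 \<le> s \<longrightarrow> h1 i = i + r + 1) \<and>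
   (\<forall>i. s \<le> i + r \<and> i \<le> m \<longrightarrow> h1 i = s)"
proof -
  have "i \<le> m \<Longrightarrow> h2 i = min (i + 1) r" for i using h2_eq_min[of i] r by simp
  then show ?thesis using h1_eq_case1 r_m s_lower s_upper by (auto simp: min_def)
qed

lemma shape_h_degenerate:
  assumes "t = 3 * r"
  shows "(h 0 = 1 \<and>
          (\<forall>i. 1 \<le> i \<and> i < r \<longrightarrow> h i = 3 * i) \<and>
          (\<forall>i. r \<le> i \<and> i \<le> m \<longrightarrow> h i = 3 * r))
       \<or>
         (h 0 = 1 \<and>
          (\<forall>i. 1 \<le> i \<and> i < r \<longrightarrow> h i = 3 * i) \<and>
          h r = 3 * r - 1 \<and>
          (\<forall>i. r + 1 \<le> i \<and> i \<le> m \<longrightarrow> h i = 3 * r))"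
proof -
  have sr: "s - r = r" "t - s = r" using assms s_lower t_lower by simp_all
  from b_cases_case1 show ?thesis
  proof
    assume "\<forall>i\<le>m. b i = min (i + 1) (t - s)"
    then have "1 \<le> i \<Longrightarrow> i \<le> m \<Longrightarrow> h i = min (i + 1) r + min (i - 1) r + min i r" for i
      using h_eq_case1[of i] sr by simp
    then show ?thesis using h_0 r_pos r_m by (auto simp: min_def)
  next
    assume "t = 3 * r \<and> (\<forall>i\<le>r. b i = i + 1) \<and> (\<forall>i. r < i \<and> i \<le> m \<longrightarrow> b i = r)"
    then have "1 \<le> i \<Longrightarrow> i \<le> m \<Longrightarrow> h i = (if i \<le> r then i + 1 else r) + min (i - 1) r + min i r" for i
      using h_eq_case1[of i] sr by auto
    then show ?thesis using h_0 r_pos r_m by (auto simp: min_def)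
  qed
qed

lemma shape_h_generic:
  assumes "t \<noteq> 3 * r"
  shows "h 0 = 1 \<and>
          (\<forall>i. 1 \<le> i \<and> i \<le> r \<longrightarrow> h i = 3 * i) \<and>
          (\<forall>i. r + 1 \<le> i \<and> i + r + 1 \<le> s \<longrightarrow> h i = 2 * i + r + 1) \<and>
          (2 * s < t + r \<and> 2 * r < s \<longrightarrow> h (s - r) = 2 * (s - r) + r + 1) \<and>
          (2 * s < t + r \<and> s = 2 * r \<longrightarrow> h (s - r) = 2 * (s - r) + r) \<and>
          (\<forall>i. s + 1 \<le> i + r \<and> i + s + 1 \<le> t \<longrightarrow> h i = i + s + 1) \<and>
          (\<forall>i. t \<le> i + s \<and> i \<le> m \<longrightarrow> h i = t)"
proof -
  define c \<beta> where "c = s - r" and "\<beta> = t - s"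
  have c: "r \<le> c" "c \<le> m" "s = r + c" and \<beta>: "c \<le> \<beta>" "\<beta> \<le> m + 1" "t = s + \<beta>"
    using s_lower s_upper t_lower t_upper by (simp_all add: c_def \<beta>_def)
  have "r + 1 \<le> \<beta>" using assms c \<beta> by linarith
  have h: "h i = min (i + 1) \<beta> + min (i - 1) r + min i c" if "1 \<le> i" "i \<le> m" for i
    using h_eq_case1[OF that] b_cases_case1 assms that by (auto simp: c_def \<beta>_def)
  show ?thesis
  proof (intro conjI allI impI)
    fix i
    show "h i = 3 * i" if "1 \<le> i \<and> i \<le> r"
      using h[of i] that c \<open>r + 1 \<le> \<beta>\<close> r_m by (auto simp: min_def)
    show "h i = 2 * i + r + 1" if "r + 1 \<le> i \<and> i + r + 1 \<le> s"
      using h[of i] that c \<beta> by (auto simp: min_def)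
    show "h i = i + s + 1" if "s + 1 \<le> i + r \<and> i + s + 1 \<le> t"
      using h[of i] that c \<beta> by (auto simp: min_def)
    show "h i = t" if "t \<le> i + s \<and> i \<le> m"
      using h[of i] that c \<beta> \<open>r + 1 \<le> \<beta>\<close> by (auto simp: min_def)
  next
    show "h (s - r) = 2 * (s - r) + r + 1" if "2 * s < t + r \<and> 2 * r < s"
      using h[of c] that c \<beta> by (auto simp: min_def)
    show "h (s - r) = 2 * (s - r) + r" if "2 * s < t + r \<and> s = 2 * r"
      using h[of c] that c \<beta> r_pos by (auto simp: min_def)
  qed (rule h_0)
qed

end

end

context complementary_derivations
begin

lemma macaulay_growth_kernel_dim: "homog e G \<Longrightarrow> macaulay_growth e (kernel_dim G e)"
  unfolding macaulay_growth_def using kernel_dim_le kernel_dim_growth by blast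

end

lemma hilbert_tower_act_powers:
  fixes F L :: "'a::field_char_0 poly3"
  assumes F: "F \<noteq> 0" "homog (2 * m + 1) F" and m: "1 \<le> m" and L: "homog 1 L"
    and l2: "act (L ^ 2) F \<noteq> 0" and l3: "act (L ^ 3) F = 0"
  shows "\<exists>b1 b. hilbert_tower m (hilb (act (L ^ 2) F)) (hilb (act (L ^ 1) F)) (hilb F) b1 b"
proof -
  have "L \<noteq> 0" using l2 by auto
  then obtain u v where "complementary_derivations L u v"
    using complementary_derivations_exist[OF L] by blast
  then interpret complementary_derivations L u v .
  define G1 G2 where "G1 = act (L ^ 1) F" and "G2 = act (L ^ 2) F"
  have "L ^ 3 = L * L ^ 2" by (simp add: power3_eq_cube power2_eq_square mult.assoc)
  then have LF: "act L F = G1" and LG1: "act L G1 = G2" and LG2: "act L G2 = 0"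
    using l3 by (simp_all add: G1_def G2_def act_mult power2_eq_square)
  have G1: "homog (2 * m) G1" using act_homog(1)[OF F(2) L] LF by simp
  have G2: "homog (2 * m - 1) G2" using act_homog(1)[OF G1 L] LG1 by simp
  have "G2 \<noteq> 0" using l2 G2_def by simp
  then have "G1 \<noteq> 0" using LG1 by auto
  have "hilbert_tower m (hilb G2) (hilb G1) (hilb F) (kernel_dim G1 (2 * m)) (kernel_dim F (2 * m + 1))"
  proof
    show "macaulay_growth (2 * m - 1) (hilb G2)"
      using macaulay_growth_kernel_dim[OF G2] hilb_eq_kernel_dim[OF G2 LG2] macaulay_growth_cong by blast
    show "hilb G2 i = hilb G2 (2 * m - 1 - i)" if "i \<le> 2 * m - 1" for i
      using hilb_symmetric[OF G2 that] .
    show "hilb G1 i = hilb G1 (2 * m - i)" if "i \<le> 2 * m" for i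
      using hilb_symmetric[OF G1 that] .
    show "hilb F i = hilb F (2 * m + 1 - i)" if "i \<le> 2 * m + 1" for i
      using hilb_symmetric[OF F(2) that] .
    show "hilb G1 i = kernel_dim G1 (2 * m) i + hilb G2 (i - 1)" if "1 \<le> i" "i \<le> 2 * m" for i
      using hilb_eq_kernel_dim_add_hilb[OF G1 that] LG1 by simp
    show "hilb F i = kernel_dim F (2 * m + 1) i + hilb G1 (i - 1)" if "1 \<le> i" "i \<le> 2 * m + 1" for i
      using hilb_eq_kernel_dim_add_hilb[OF F(2) that] LF by simp
  qed (use m F G1 \<open>G1 \<noteq> 0\<close> \<open>G2 \<noteq> 0\<close> in \<open>simp_all add: hilb_0_right macaulay_growth_kernel_dim\<close>)
  then show ?thesis unfolding G1_def G2_def by blast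
qed

theorem theorem4p4:
  fixes F L :: "'a::field_char_0 poly3"
    and d m r s t :: nat
  assumes F_nz: "F \<noteq> 0" and F_hom: "homog d F"
    and d_odd: "d = 2 * m + 1" and d_ge: "d \<ge> 3"
    and l_lin: "homog 1 L"
    and l2: "act (L ^ 2) F \<noteq> 0" and l3: "act (L ^ 3) F = 0"
    and r_def: "r = hilb (act (L ^ 2) F) m"
    and s_def: "s = hilb (act (L ^ 1) F) m"
    and t_def: "t = hilb F m"
  shows
   "(d \<ge> 5 \<and> 1 \<le> r \<and> r + 1 \<le> m \<and> 2 * r \<le> s \<and> s \<le> m + r
       \<and> 2 * s \<le> t + r \<and> t \<le> m + s + 1 \<longrightarrow>
      (\<forall>i. i < r \<longrightarrow> hilb (act (L ^ 2) F) i = i + 1) \<and>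
      (\<forall>i. r \<le> i \<and> i \<le> m \<longrightarrow> hilb (act (L ^ 2) F) i = r) \<and>
      (\<forall>i. i < r \<longrightarrow> hilb (act (L ^ 1) F) i = 2 * i + 1) \<and>
      (\<forall>i. r \<le> i \<and> i + r + 1 \<le> s \<longrightarrow> hilb (act (L ^ 1) F) i = i + r + 1) \<and>
      (\<forall>i. s \<le> i + r \<and> i \<le> m \<longrightarrow> hilb (act (L ^ 1) F) i = s) \<and>
      (t = 3 * r \<longrightarrow>
         (hilb F 0 = 1 \<and>
          (\<forall>i. 1 \<le> i \<and> i < r \<longrightarrow> hilb F i = 3 * i) \<and>
          (\<forall>i. r \<le> i \<and> i \<le> m \<longrightarrow> hilb F i = 3 * r))
       \<or>
         (hilb F 0 = 1 \<and>
          (\<forall>i. 1 \<le> i \<and> i < r \<longrightarrow> hilb F i = 3 * i) \<and>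
          hilb F r = 3 * r - 1 \<and>
          (\<forall>i. r + 1 \<le> i \<and> i \<le> m \<longrightarrow> hilb F i = 3 * r))) \<and>
      (t \<noteq> 3 * r \<longrightarrow>
          hilb F 0 = 1 \<and>
          (\<forall>i. 1 \<le> i \<and> i \<le> r \<longrightarrow> hilb F i = 3 * i) \<and>
          (\<forall>i. r + 1 \<le> i \<and> i + r + 1 \<le> s \<longrightarrow> hilb F i = 2 * i + r + 1) \<and>
          (2 * s < t + r \<and> 2 * r < s \<longrightarrow> hilb F (s - r) = 2 * (s - r) + r + 1) \<and>
          (2 * s < t + r \<and> s = 2 * r \<longrightarrow> hilb F (s - r) = 2 * (s - r) + r) \<and>
          (\<forall>i. s + 1 \<le> i + r \<and> i + s + 1 \<le> t \<longrightarrow> hilb F i = i + s + 1) \<and>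
          (\<forall>i. t \<le> i + s \<and> i \<le> m \<longrightarrow> hilb F i = t)))
    \<and>
    (1 \<le> r \<and> r + 1 \<le> m \<and> s = m + r + 1 \<and> t = d + r \<longrightarrow>
      (\<forall>i. i \<le> r \<longrightarrow> hilb (act (L ^ 1) F) i = 2 * i + 1) \<and>
      (\<forall>i. r + 1 \<le> i \<and> i \<le> m \<longrightarrow> hilb (act (L ^ 1) F) i = i + 1 + r) \<and>
      hilb F 0 = 1 \<and>
      (\<forall>i. 1 \<le> i \<and> i \<le> r + 1 \<longrightarrow> hilb F i = 3 * i) \<and>
      (\<forall>i. r + 2 \<le> i \<and> i \<le> m \<longrightarrow> hilb F i = 2 * i + 1 + r))
    \<and>
    (r = m \<and> d - 1 \<le> s \<and> s \<le> d \<and> m + s - 1 \<le> t \<and> t \<le> 3 * m \<longrightarrow>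
      (\<forall>i. i < m \<longrightarrow>
         hilb (act (L ^ 2) F) i = i + 1 \<and>
         hilb (act (L ^ 1) F) i = 2 * i + 1 \<and>
         hilb F 0 = 1 \<and>
         (1 \<le> i \<longrightarrow> hilb F i = 3 * i)))"
proof -
  have m: "1 \<le> m" using d_odd d_ge by simp
  then obtain b1 b where
    "hilbert_tower m (hilb (act (L ^ 2) F)) (hilb (act (L ^ 1) F)) (hilb F) b1 b"
    using hilbert_tower_act_powers F_nz F_hom d_odd l_lin l2 l3 by blast
  then interpret T: hilbert_tower m "hilb (act (L ^ 2) F)" "hilb (act (L ^ 1) F)" "hilb F" b1 b .
  show ?thesis
    apply (rule conjI[OF impI conjI[OF impI impI]])
    subgoal premises hyps
    proof -
      have bounds: "1 \<le> r" "r + 1 \<le> m" "2 * r \<le> s" "s \<le> m + r" "2 * s \<le> t + r" "t \<le> m + s + 1"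
        using hyps by simp_all
      \<comment> \<open>\<open>argo\<close> treats the quantified conjuncts as atoms: what is left is propositional\<close>
      show ?thesis
        using T.shape_h2_h1[OF r_def s_def t_def bounds] T.shape_h_degenerate[OF r_def s_def t_def bounds]
          T.shape_h_generic[OF r_def s_def t_def bounds]
        by argo
    qed
    subgoal by (elim conjE) (rule T.shape_s_maximal[OF r_def s_def t_def]; simp add: d_odd)
    subgoal by (elim conjE) (rule T.shape_r_maximal[OF r_def s_def t_def]; simp add: d_odd)
    done
qed

end
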